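(* Consider either the pair ($\Phi_\lambda=\Phi_{+,\lambda}$, $\Psi_\mu=\Psi_{+,\mu}$) or the pair ($\Phi_\lambda=\Phi_{0,\lambda}$, $\Psi_\mu=\Psi_{0,\mu}$), with arbitrary $\lambda,\mu>0$. (i) Let $x^*$ be a local minimizer of (P) with $F(x^* )<\infty$, let $J_*=\{i:(Bx^*-b)_i\ne0\}$, $\bar J_*=[r]\setminus J_*$, and suppose $\{x: x\in\operatorname{ri}(\operatorname{dom}f),\ Ax\in\operatorname{ri}(\operatorname{dom}g),\ (Bx-b)_{\bar J_*}\le0\}\ne\emptyset$ (in the $\Phi_{+,\lambda}$ case), resp. $\{x: x\in\operatorname{ri}(\operatorname{dom}f),\ Ax\in\operatorname{ri}(\operatorname{dom}g),\ (Bx-b)_{\bar J_*}=0\}\ne\emptyset$ (in the $\Phi_{0,\lambda}$ case). Then there exist $y^*\in\partial g(Ax^* )$ and $z^*\in\partial\Phi_\lambda(Bx^*-b)$ such that $w^*=[y^*;z^*]$ is a local minimizer of (D), and $\Theta(x^* )=-\Xi(w^* )$. (ii) Let $w^*=[y^*;z^*]$ be a local minimizer of (D) with $G(w^* )<\infty$, let $T_*=\{i:z^*_i\ne0\}$, $\bar T_*=[r]\setminus T_*$, and suppose $\{w=[y;z]: -A^\top y-B^\top z\in\operatorname{ri}(\operatorname{dom}f^* ),\ y\in\operatorname{ri}(\operatorname{dom}g^* ),\ z_{\bar T_*}=0,\ z_{T_*}\ge0\}\ne\emptyset$ (in the $\Psi_{+,\mu}$ case), resp. the same set without the constraint $z_{T_*}\ge0$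 (in the $\Psi_{0,\mu}$ case). Then there exists $x^*\in\partial f^*(-A^\top y^*-B^\top z^* )$ that is a local minimizer of (P), and $\Theta(x^* )=-\Xi(w^* )$. In all Slater-type conditions, "$\operatorname{ri}$" may be omitted for a function that is polyhedral.
   Context: Let $f:\mathbb R^n\to(-\infty,\infty]$, $g:\mathbb R^m\to(-\infty,\infty]$ be proper, lsc and convex with conjugates $f^*(q)=\sup_x\{\langle q,x\rangle-f(x)\}$, $g^*$; $A\in\mathbb R^{m\times n}$, $B\in\mathbb R^{r\times n}$, $b\in\mathbb R^r$. $\Phi_{0,\lambda}(u)=\sum_i\lambda_i\mathbf 1_{\{u_i\ne0\}}$, $\Phi_{+,\lambda}(u)=\sum_i\lambda_i\mathbf 1_{\{u_i>0\}}$, $\Psi_{0,\mu}(z)=\sum_i\mu_i\mathbf 1_{\{z_i\ne0\}}$, $\Psi_{+,\mu}(z)=\Psi_{0,\mu}(z)+\delta(z\mid\mathbb R^r_+)$. $\Theta(x)=f(x)+g(Ax)$; (P) is $\min_x F(x)=\Theta(x)+\Phi_\lambda(Bx-b)$. For $w=[y;z]\in\mathbb R^m\times\mathbb R^r$, $\Xi(w)=f^*(-A^\top y-B^\top z)+g^*(y)+\langle b,z\rangle$; (D) is $\min_w G(w)=\Xi(w)+\Psi_\mu(z)$. $\partial$ denotes the limiting subdifferential (convex subdifferential for convex functions); $\partial\Phi_{0,\lambda}(u)=\{z:z_i\in\mathbb R\text{ if }u_i=0,\ z_i=0\text{ otherwise}\}$, $\partial\Phi_{+,\lambda}(u)=\{z:z_i\in\mathbb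 R_+\text{ if }u_i=0,\ z_i=0\text{ otherwise}\}$. $\operatorname{ri}$ denotes relative interior. *)

theory Defs
  imports "HOL-Analysis.Analysis"
begin

definition edom :: "('a \<Rightarrow> ereal) \<Rightarrow> 'a set" where
  "edom h = {x. h x < \<infinity>}"

definition proper_fun :: "('a \<Rightarrow> ereal) \<Rightarrow> bool" where
  "proper_fun h \<longleftrightarrow> (\<forall>x. h x \<noteq> -\<infinity>) \<and> (\<exists>x. h x < \<infinity>)"

definition lsc_fun :: "('a::topological_space \<Rightarrow> ereal) \<Rightarrow> bool" where
  "lsc_fun h \<longleftrightarrow> (\<forall>x t. t < h x \<longrightarrow> eventually (\<lambda>y. t < h y) (at x))"

definition epigraph :: "('a \<Rightarrow> ereal) \<Rightarrow> ('a \<times> real) set" where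
  "epigraph h = {(x, t). h x \<le> ereal t}"

definition convex_fun :: "('a::real_vector \<Rightarrow> ereal) \<Rightarrow> bool" where
  "convex_fun h \<longleftrightarrow> convex (epigraph h)"

definition polyhedral_fun :: "('a::euclidean_space \<Rightarrow> ereal) \<Rightarrow> bool" where
  "polyhedral_fun h \<longleftrightarrow> polyhedron (epigraph h)"

definition conj :: "('a::real_inner \<Rightarrow> ereal) \<Rightarrow> 'a \<Rightarrow> ereal" where
  "conj h q = (SUP x. ereal (q \<bullet> x) - h x)"

definition csubdiff :: "('a::real_inner \<Rightarrow> ereal) \<Rightarrow> 'a \<Rightarrow> 'a set" where
  "csubdiff h x = {v. \<bar>h x\<bar> \<noteq> \<infinity> \<and> (\<forall>u. h x + ereal (v \<bullet> (u - x)) \<le> h u)}"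

definition slater_dom :: "('a::euclidean_space \<Rightarrow> ereal) \<Rightarrow> 'a set" where
  "slater_dom h = (if polyhedral_fun h then edom h else rel_interior (edom h))"

(* the penalties; pos = True selects Phi_+ / Psi_+, pos = False selects Phi_0 / Psi_0 *)
definition Phi :: "bool \<Rightarrow> real^'r \<Rightarrow> real^'r \<Rightarrow> real" where
  "Phi pos lam u = (if pos then (\<Sum>i\<in>UNIV. if u $ i > 0 then lam $ i else 0)
                    else (\<Sum>i\<in>UNIV. if u $ i \<noteq> 0 then lam $ i else 0))"

definition Psi :: "bool \<Rightarrow> real^'r \<Rightarrow> real^'r \<Rightarrow> ereal" where
  "Psi pos mu z = ereal (\<Sum>i\<in>UNIV. if z $ i \<noteq> 0 then mu $ i else 0)
                  + (if pos \<and> \<not> (\<forall>i. z $ i \<ge> 0) then \<infinity> else 0)"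

(* subdifferential of Phi, as given explicitly in the paper *)
definition subdiff_Phi :: "bool \<Rightarrow> real^'r \<Rightarrow> (real^'r) set" where
  "subdiff_Phi pos u = {z. \<forall>i. (u $ i = 0 \<longrightarrow> (pos \<longrightarrow> z $ i \<ge> 0)) \<and> (u $ i \<noteq> 0 \<longrightarrow> z $ i = 0)}"

definition Theta :: "(real^'n \<Rightarrow> ereal) \<Rightarrow> (real^'m \<Rightarrow> ereal) \<Rightarrow> real^'n^'m \<Rightarrow> real^'n \<Rightarrow> ereal" where
  "Theta f g A x = f x + g (A *v x)"

definition FP :: "bool \<Rightarrow> (real^'n \<Rightarrow> ereal) \<Rightarrow> (real^'m \<Rightarrow> ereal) \<Rightarrow> real^'n^'m
     \<Rightarrow> real^'n^'r \<Rightarrow> real^'r \<Rightarrow> real^'r \<Rightarrow> real^'n \<Rightarrow> ereal" where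
  "FP pos f g A B b lam x = Theta f g A x + ereal (Phi pos lam (B *v x - b))"

definition Xi :: "(real^'n \<Rightarrow> ereal) \<Rightarrow> (real^'m \<Rightarrow> ereal) \<Rightarrow> real^'n^'m
     \<Rightarrow> real^'n^'r \<Rightarrow> real^'r \<Rightarrow> (real^'m) \<times> (real^'r) \<Rightarrow> ereal" where
  "Xi f g A B b w = conj f (- (transpose A *v fst w) - transpose B *v snd w)
                    + conj g (fst w) + ereal (b \<bullet> snd w)"

definition GD :: "bool \<Rightarrow> (real^'n \<Rightarrow> ereal) \<Rightarrow> (real^'m \<Rightarrow> ereal) \<Rightarrow> real^'n^'m
     \<Rightarrow> real^'n^'r \<Rightarrow> real^'r \<Rightarrow> real^'r \<Rightarrow> (real^'m) \<times> (real^'r) \<Rightarrow> ereal" where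
  "GD pos f g A B b mu w = Xi f g A B b w + Psi pos mu (snd w)"

definition local_min :: "('a::metric_space \<Rightarrow> ereal) \<Rightarrow> 'a \<Rightarrow> bool" where
  "local_min h x \<longleftrightarrow> (\<exists>e>0. \<forall>y. dist y x < e \<longrightarrow> h x \<le> h y)"

end

theory Submission
  imports Defs
begin

(* A local minimizer of a penalized problem is the same as a minimizer of its convex part over the
   polyhedral "pattern" set on which the penalty is locally constant: near the point the penalty
   keeps its value on that set and jumps by at least the smallest weight off it, while the convex
   part is lower semicontinuous.  Both restricted problems are convex programs with linear
   constraints, so a Slater point (relative interior, or plain domain for polyhedral data) yields
   Lagrange multipliers.  The multipliers of the primal problem form a dual point whose dual value
   is minus the primal one, and conversely by Fenchel-Moreau; weak duality (Fenchel-Young) shows that this point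
   minimizes the other convex part over its own pattern set, hence is a local minimizer of the
   other penalized problem. *)

section \<open>Extended-real convex functions\<close>

lemma convex_funD:
  assumes "convex_fun h" "h x \<le> ereal a" "h y \<le> ereal b" "0 \<le> u" "u \<le> 1"
  shows "h ((1 - u) *\<^sub>R x + u *\<^sub>R y) \<le> ereal ((1 - u) * a + u * b)"
proof -
  have "(1 - u) *\<^sub>R (x, a) + u *\<^sub>R (y, b) \<in> epigraph h"
    using assms unfolding convex_fun_def convex_alt by (auto simp: epigraph_def)
  then show ?thesis by (simp add: epigraph_def)
qed

lemma convex_funI:
  assumes "\<And>x y a b u. h x \<le> ereal a \<Longrightarrow> h y \<le> ereal b \<Longrightarrow> 0 \<le> u \<Longrightarrow> u \<le> 1 \<Longrightarrow>
    h ((1 - u) *\<^sub>R x + u *\<^sub>R y) \<le> ereal ((1 - u) * a + u * b)"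
  shows "convex_fun h"
  unfolding convex_fun_def convex_alt epigraph_def using assms by auto

lemma convex_fun_add:
  assumes "convex_fun h1" "convex_fun h2" "\<And>x. h1 x \<noteq> -\<infinity>" "\<And>x. h2 x \<noteq> -\<infinity>"
  shows "convex_fun (\<lambda>x. h1 x + h2 x)"
proof (rule convex_funI)
  fix x y a b and u :: real
  assume x: "h1 x + h2 x \<le> ereal a" and y: "h1 y + h2 y \<le> ereal b" and u: "0 \<le> u" "u \<le> 1"
  obtain a1 a2 where "h1 x = ereal a1" "h2 x = ereal a2" "a1 + a2 \<le> a"
    using x assms(3,4)[of x] by (cases "h1 x"; cases "h2 x") auto
  moreover obtain b1 b2 where "h1 y = ereal b1" "h2 y = ereal b2" "b1 + b2 \<le> b"
    using y assms(3,4)[of y] by (cases "h1 y"; cases "h2 y") auto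
  ultimately have "h1 ((1 - u) *\<^sub>R x + u *\<^sub>R y) + h2 ((1 - u) *\<^sub>R x + u *\<^sub>R y)
      \<le> ereal ((1 - u) * a1 + u * b1) + ereal ((1 - u) * a2 + u * b2)"
    using u by (intro add_mono convex_funD[OF assms(1)] convex_funD[OF assms(2)]) auto
  also have "\<dots> \<le> ereal ((1 - u) * a + u * b)"
  proof -
    have "(1 - u) * (a1 + a2) \<le> (1 - u) * a" "u * (b1 + b2) \<le> u * b"
      using u \<open>a1 + a2 \<le> a\<close> \<open>b1 + b2 \<le> b\<close> by (simp_all add: mult_left_mono)
    then show ?thesis by (simp add: algebra_simps)
  qed
  finally show "h1 ((1 - u) *\<^sub>R x + u *\<^sub>R y) + h2 ((1 - u) *\<^sub>R x + u *\<^sub>R y) \<le> ereal ((1 - u) * a + u * b)" .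
qed

lemma convex_fun_compose_linear:
  assumes "convex_fun h" "linear L"
  shows "convex_fun (\<lambda>x. h (L x))"
  by (rule convex_funI) (use convex_funD[OF assms(1)] in \<open>simp add: linear_add linear_scale assms(2)\<close>)

lemma convex_fun_linear:
  assumes "linear l"
  shows "convex_fun (\<lambda>x. ereal (l x))"
  by (rule convex_funI) (auto simp: linear_add linear_scale assms intro!: add_mono mult_left_mono)

lemma convex_fun_min_of_local_min:
  fixes h :: "'a::real_normed_vector \<Rightarrow> ereal"
  assumes h: "convex_fun h" "h x0 < \<infinity>" and C: "convex C" "x0 \<in> C" "x \<in> C"
    and loc: "e > 0" "\<And>x. x \<in> C \<Longrightarrow> dist x x0 < e \<Longrightarrow> h x0 \<le> h x"
  shows "h x0 \<le> h x"
proof (cases "h x0")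
  case (real v)
  show ?thesis
  proof (rule ereal_le_real)
    fix a assume ha: "h x \<le> ereal a"
    define u where "u = min 1 (e / (norm (x - x0) + 1))"
    have n: "0 < norm (x - x0) + 1" by (simp add: add_nonneg_pos)
    then have u: "0 < u" "u \<le> 1" using loc(1) by (auto simp: u_def)
    have "u * norm (x - x0) \<le> e / (norm (x - x0) + 1) * norm (x - x0)"
      unfolding u_def by (rule mult_right_mono) simp_all
    also have "\<dots> < e"
      using loc(1) n by (simp add: divide_less_eq mult_strict_left_mono)
    finally have "dist ((1 - u) *\<^sub>R x0 + u *\<^sub>R x) x0 < e"
      using u by (simp add: dist_norm algebra_simps flip: scaleR_diff_right)
    moreover have "(1 - u) *\<^sub>R x0 + u *\<^sub>R x \<in> C"
      using C u by (simp add: convex_alt)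
    ultimately have "ereal v \<le> h ((1 - u) *\<^sub>R x0 + u *\<^sub>R x)"
      using loc(2) real by metis
    also have "\<dots> \<le> ereal ((1 - u) * v + u * a)"
      using convex_funD[OF h(1) _ ha] real u by simp
    finally have "u * v \<le> u * a" by (simp add: algebra_simps)
    then show "h x0 \<le> ereal a" using u real by simp
  qed
qed (use h(2) in simp_all)

section \<open>Lower semicontinuity and conjugates\<close>

lemma lsc_fun_nhds_iff:
  "lsc_fun h \<longleftrightarrow> (\<forall>x t. t < h x \<longrightarrow> eventually (\<lambda>y. t < h y) (nhds x))"
proof -
  have "eventually (\<lambda>y. y \<noteq> x \<longrightarrow> y \<in> UNIV \<longrightarrow> t < h y) (nhds x) \<longleftrightarrow> eventually (\<lambda>y. t < h y) (nhds x)"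
    if "t < h x" for x t
  proof
    assume "eventually (\<lambda>y. y \<noteq> x \<longrightarrow> y \<in> UNIV \<longrightarrow> t < h y) (nhds x)"
    then show "eventually (\<lambda>y. t < h y) (nhds x)" by (rule eventually_mono) (metis that UNIV_I)
  qed (auto elim: eventually_mono)
  then show ?thesis unfolding lsc_fun_def eventually_at_filter by blast
qed

lemma lsc_funD_nhds: "lsc_fun h \<Longrightarrow> t < h x \<Longrightarrow> eventually (\<lambda>y. t < h y) (nhds x)"
  by (simp add: lsc_fun_nhds_iff)

lemma ereal_less_add_split:
  assumes "ereal t < a + b" "a \<noteq> -\<infinity>" "b \<noteq> -\<infinity>"
  obtains s where "ereal s < a" "ereal (t - s) < b"
proof (cases b)
  case (real q)
  then have "ereal (t - q) < a" using assms(1) by (cases a) auto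
  then obtain s where "ereal (t - q) < ereal s" "ereal s < a" using ereal_dense2 by blast
  then show ?thesis using that real by simp
next
  case PInf
  have "\<exists>s. ereal s < a" using assms(2) by (cases a) (auto simp: lt_ex)
  then show ?thesis using that PInf by auto
qed (use assms in simp)

lemma lsc_fun_add:
  assumes "lsc_fun h1" "lsc_fun h2" "\<And>x. h1 x \<noteq> -\<infinity>" "\<And>x. h2 x \<noteq> -\<infinity>"
  shows "lsc_fun (\<lambda>x. h1 x + h2 x)"
  unfolding lsc_fun_nhds_iff
proof (intro allI impI)
  fix x t assume t: "t < h1 x + h2 x"
  show "eventually (\<lambda>y. t < h1 y + h2 y) (nhds x)"
  proof (cases t)
    case (real r)
    then obtain s where "ereal s < h1 x" "ereal (r - s) < h2 x"
      using t assms(3,4) ereal_less_add_split by metis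
    then have "eventually (\<lambda>y. ereal s < h1 y \<and> ereal (r - s) < h2 y) (nhds x)"
      using assms(1,2) by (intro eventually_conj lsc_funD_nhds)
    then show ?thesis
    proof eventually_elim
      case (elim y)
      then have "ereal s + ereal (r - s) < h1 y + h2 y" by (intro ereal_add_strict_mono2) simp_all
      then show ?case using real by simp
    qed
  next
    case MInf
    have "-\<infinity> < h1 y + h2 y" for y using assms(3,4)[of y] by (cases "h1 y"; cases "h2 y") auto
    then show ?thesis using MInf by simp
  qed (use t in simp)
qed

lemma lsc_fun_compose:
  assumes "lsc_fun h" "\<And>x. isCont L x"
  shows "lsc_fun (\<lambda>x. h (L x))"
  unfolding lsc_fun_nhds_iff
proof (intro allI impI)
  fix x t assume "t < h (L x)"
  then have "eventually (\<lambda>y. t < h y) (nhds (L x))" by (rule lsc_funD_nhds[OF assms(1)])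
  moreover have "(L \<longlongrightarrow> L x) (nhds x)" using assms(2) isCont_def tendsto_at_iff_tendsto_nhds by blast
  ultimately show "eventually (\<lambda>y. t < h (L y)) (nhds x)" unfolding filterlim_iff by blast
qed

lemma lsc_fun_continuous:
  assumes "\<And>x. isCont l x"
  shows "lsc_fun (\<lambda>x. ereal (l x))"
  unfolding lsc_fun_nhds_iff
proof (intro allI impI)
  fix x and t :: ereal assume t: "t < ereal (l x)"
  have "(l \<longlongrightarrow> l x) (nhds x)" using assms isCont_def tendsto_at_iff_tendsto_nhds by blast
  then show "eventually (\<lambda>y. t < ereal (l y)) (nhds x)"
    using t by (cases t) (auto dest: order_tendstoD(1))
qed

lemma closed_epigraph:
  assumes "lsc_fun h"
  shows "closed (epigraph h)"
  unfolding closed_def open_subopen[of "- epigraph h"]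
proof
  fix p assume "p \<in> - epigraph h"
  then obtain x t where p: "p = (x, t)" and lt: "ereal t < h x"
    unfolding epigraph_def by (cases p) auto
  obtain t' where t': "t < t'" "ereal t' < h x" using ereal_dense2[OF lt] by auto
  obtain U where U: "open U" "x \<in> U" "\<forall>y\<in>U. ereal t' < h y"
    using lsc_funD_nhds[OF assms t'(2)] unfolding eventually_nhds by blast
  have "U \<times> {..<t'} \<subseteq> - epigraph h"
  proof
    fix q assume "q \<in> U \<times> {..<t'}"
    then obtain y s where q: "q = (y, s)" "y \<in> U" "s < t'" by auto
    then have "ereal s < h y" using U(3) less_trans[of "ereal s" "ereal t'"] by simp
    then show "q \<in> - epigraph h" using q(1) by (simp add: epigraph_def not_le)
  qed
  then show "\<exists>T. open T \<and> p \<in> T \<and> T \<subseteq> - epigraph h"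
    using U p t'(1) by (intro exI[of _ "U \<times> {..<t'}"]) (auto intro: open_Times)
qed

lemma proper_funE:
  assumes "proper_fun h"
  obtains x r where "h x = ereal r"
proof -
  obtain x where "h x < \<infinity>" "h x \<noteq> -\<infinity>" using assms unfolding proper_fun_def by blast
  then show ?thesis using that by (cases "h x") auto
qed

lemma fenchel_young: "ereal (q \<bullet> x) - h x \<le> conj h q"
  unfolding conj_def by (rule SUP_upper) simp

lemma conj_neq_minf:
  assumes "proper_fun h"
  shows "conj h q \<noteq> -\<infinity>"
proof -
  obtain x r where "h x = ereal r" using assms by (rule proper_funE)
  then show ?thesis using fenchel_young[of q x h] by auto
qed

lemma conj_eq_of_csubdiff:
  assumes "v \<in> csubdiff h x"
  shows "conj h v = ereal (v \<bullet> x) - h x"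
proof (rule antisym)
  obtain r where r: "h x = ereal r" and sg: "\<And>u. ereal (r + v \<bullet> (u - x)) \<le> h u"
    using assms unfolding csubdiff_def by (cases "h x") auto
  show "conj h v \<le> ereal (v \<bullet> x) - h x"
    unfolding conj_def
  proof (rule SUP_least)
    fix u
    show "ereal (v \<bullet> u) - h u \<le> ereal (v \<bullet> x) - h x"
      using sg[of u] r by (cases "h u") (auto simp: inner_diff_right)
  qed
qed (rule fenchel_young)

lemma convex_fun_conj: "convex_fun (conj h)"
proof (rule convex_funI)
  fix p q a b and u :: real
  assume p: "conj h p \<le> ereal a" and q: "conj h q \<le> ereal b" and u: "0 \<le> u" "u \<le> 1"
  show "conj h ((1 - u) *\<^sub>R p + u *\<^sub>R q) \<le> ereal ((1 - u) * a + u * b)"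
    unfolding conj_def
  proof (rule SUP_least)
    fix x
    have "ereal (p \<bullet> x) - h x \<le> ereal a" "ereal (q \<bullet> x) - h x \<le> ereal b"
      using order_trans[OF fenchel_young p] order_trans[OF fenchel_young q] .
    then show "ereal (((1 - u) *\<^sub>R p + u *\<^sub>R q) \<bullet> x) - h x \<le> ereal ((1 - u) * a + u * b)"
    proof (cases "h x")
      case (real r)
      with \<open>ereal (p \<bullet> x) - h x \<le> ereal a\<close> \<open>ereal (q \<bullet> x) - h x \<le> ereal b\<close>
      have "(1 - u) * (p \<bullet> x - r) + u * (q \<bullet> x - r) \<le> (1 - u) * a + u * b"
        using u by (intro add_mono mult_left_mono) auto
      then show ?thesis using real by (simp add: inner_add_left algebra_simps)
    qed auto
  qed
qed

lemma lsc_fun_conj: "lsc_fun (conj h)"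
  unfolding lsc_fun_nhds_iff
proof (intro allI impI)
  fix q0 t assume "t < conj h q0"
  then obtain x where x: "t < ereal (q0 \<bullet> x) - h x" unfolding conj_def less_SUP_iff by blast
  have "eventually (\<lambda>q. t < ereal (q \<bullet> x) - h x) (nhds q0)"
  proof (cases "h x")
    case (real r)
    have "((\<lambda>q. ereal (q \<bullet> x) - h x) \<longlongrightarrow> ereal (q0 \<bullet> x) - h x) (nhds q0)"
      unfolding real by (intro tendsto_intros filterlim_ident) auto
    then show ?thesis using x by (rule order_tendstoD)
  qed (use x in auto)
  then show "eventually (\<lambda>q. t < conj h q) (nhds q0)"
    by eventually_elim (rule less_le_trans[OF _ fenchel_young])
qed

lemma separating_hyperplane_epigraph:
  fixes h :: "'a::euclidean_space \<Rightarrow> ereal"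
  assumes "convex_fun h" "lsc_fun h" "proper_fun h" "ereal t < h x"
  obtains w \<alpha> c where "\<alpha> \<ge> 0" "w \<bullet> x + \<alpha> * t < c" "\<And>u s. h u \<le> ereal s \<Longrightarrow> c < w \<bullet> u + \<alpha> * s"
proof -
  have "(x, t) \<notin> epigraph h" using assms(4) unfolding epigraph_def by auto
  then obtain a c where ac: "a \<bullet> (x, t) < c" "\<forall>p\<in>epigraph h. c < a \<bullet> p"
    using separating_hyperplane_closed_point[OF _ closed_epigraph[OF assms(2)]] assms(1)
    unfolding convex_fun_def by blast
  obtain w \<alpha> where a: "a = (w, \<alpha>)" by (cases a)
  have sep: "c < w \<bullet> u + \<alpha> * s" if "h u \<le> ereal s" for u s
    using ac(2) that unfolding a epigraph_def by auto
  obtain x0 r0 where r0: "h x0 \<le> ereal r0" using assms(3) by (metis proper_funE order_refl)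
  have "\<alpha> \<ge> 0"
  proof (rule ccontr)
    assume "\<not> \<alpha> \<ge> 0"
    \<comment> \<open>Otherwise points high up in the epigraph would violate the separation.\<close>
    define k where "k = (\<bar>w \<bullet> x0 + \<alpha> * r0 - c\<bar> + 1) / - \<alpha>"
    have "k \<ge> 0" "\<alpha> * k = - (\<bar>w \<bullet> x0 + \<alpha> * r0 - c\<bar> + 1)"
      using \<open>\<not> \<alpha> \<ge> 0\<close> unfolding k_def by (simp_all add: divide_nonneg_nonpos)
    moreover have "c < w \<bullet> x0 + \<alpha> * (r0 + k)"
      using \<open>k \<ge> 0\<close> r0 by (intro sep) (simp add: order_trans)
    ultimately show False by (simp add: algebra_simps)
  qed
  then show ?thesis using that ac(1) sep unfolding a by auto
qed

lemma affine_minorant_of_separation: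
  assumes "\<alpha> > 0" "\<And>u s. h u \<le> ereal s \<Longrightarrow> c < w \<bullet> u + \<alpha> * s" "\<And>u. h u \<noteq> -\<infinity>"
  shows "ereal ((- (1 / \<alpha>)) *\<^sub>R w \<bullet> u + c / \<alpha>) \<le> h u"
proof (cases "h u")
  case (real r)
  then have "c < w \<bullet> u + \<alpha> * r" using assms(2) by auto
  then show ?thesis using real assms(1) by (simp add: field_simps)
qed (use assms(3) in auto)

lemma affine_minorant_exists:
  fixes h :: "'a::euclidean_space \<Rightarrow> ereal"
  assumes h: "proper_fun h" "lsc_fun h" "convex_fun h"
  obtains a \<beta> where "\<And>u. ereal (a \<bullet> u + \<beta>) \<le> h u"
proof -
  have nm: "\<And>u. h u \<noteq> -\<infinity>" using h(1) unfolding proper_fun_def by auto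
  obtain x0 r0 where r0: "h x0 = ereal r0" using h(1) by (rule proper_funE)
  \<comment> \<open>A point strictly below the graph over the effective domain is never separated vertically.\<close>
  have "ereal (r0 - 1) < h x0" using r0 by simp
  then obtain w \<alpha> c where s: "\<alpha> \<ge> 0" "w \<bullet> x0 + \<alpha> * (r0 - 1) < c"
      "\<And>u s. h u \<le> ereal s \<Longrightarrow> c < w \<bullet> u + \<alpha> * s"
    by (rule separating_hyperplane_epigraph[OF h(3,2,1)]) blast
  have "c < w \<bullet> x0 + \<alpha> * r0" using s(3) r0 by auto
  then have "\<alpha> > 0" using s(1,2) by (cases "\<alpha> = 0") auto
  then have "ereal ((- (1 / \<alpha>)) *\<^sub>R w \<bullet> u + c / \<alpha>) \<le> h u" for u
    using s(3) nm by (rule affine_minorant_of_separation)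
  then show ?thesis by (rule that)
qed

lemma exists_affine_minorant:
  fixes h :: "'a::euclidean_space \<Rightarrow> ereal"
  assumes h: "proper_fun h" "lsc_fun h" "convex_fun h" and t: "ereal t < h x"
  obtains a \<beta> where "\<And>u. ereal (a \<bullet> u + \<beta>) \<le> h u" "t < a \<bullet> x + \<beta>"
proof -
  have nm: "\<And>u. h u \<noteq> -\<infinity>" using h(1) unfolding proper_fun_def by auto
  obtain a0 \<beta>0 where m0: "\<And>u. ereal (a0 \<bullet> u + \<beta>0) \<le> h u"
    using affine_minorant_exists[OF h] by blast
  obtain w \<alpha> c where s: "\<alpha> \<ge> 0" "w \<bullet> x + \<alpha> * t < c" "\<And>u s. h u \<le> ereal s \<Longrightarrow> c < w \<bullet> u + \<alpha> * s"
    using t by (rule separating_hyperplane_epigraph[OF h(3,2,1)]) blast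
  show ?thesis
  proof (cases "\<alpha> = 0")
    case False
    then have "\<alpha> > 0" using s(1) by simp
    then have "t < (- (1 / \<alpha>)) *\<^sub>R w \<bullet> x + c / \<alpha>" using s(2) by (simp add: field_simps)
    moreover have "ereal ((- (1 / \<alpha>)) *\<^sub>R w \<bullet> u + c / \<alpha>) \<le> h u" for u
      using \<open>\<alpha> > 0\<close> s(3) nm by (rule affine_minorant_of_separation)
    ultimately show ?thesis using that by blast
  next
    case True
    \<comment> \<open>A vertical hyperplane: tilt the minorant \<open>m0\<close> by a large multiple of it.\<close>
    have wx: "w \<bullet> x < c" using s(2) True by simp
    have dom: "c < w \<bullet> u" if "h u < \<infinity>" for u
      using s(3)[of u "real_of_ereal (h u)"] that nm[of u] True by (cases "h u") auto
    define k where "k = max 0 ((t - (a0 \<bullet> x + \<beta>0)) / (c - w \<bullet> x)) + 1"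
    have "k \<ge> 0" unfolding k_def by simp
    have "t - (a0 \<bullet> x + \<beta>0) < k * (c - w \<bullet> x)"
    proof -
      have "(t - (a0 \<bullet> x + \<beta>0)) / (c - w \<bullet> x) < k" unfolding k_def by simp
      then show ?thesis using wx by (simp add: divide_less_eq)
    qed
    then have "t < (a0 - k *\<^sub>R w) \<bullet> x + (\<beta>0 + k * c)"
      by (simp add: inner_diff_left algebra_simps)
    moreover have "ereal ((a0 - k *\<^sub>R w) \<bullet> u + (\<beta>0 + k * c)) \<le> h u" for u
    proof (cases "h u < \<infinity>")
      case True
      have "k * (c - w \<bullet> u) \<le> 0" using dom[OF True] \<open>k \<ge> 0\<close> by (simp add: mult_nonneg_nonpos)
      then have "(a0 - k *\<^sub>R w) \<bullet> u + (\<beta>0 + k * c) \<le> a0 \<bullet> u + \<beta>0"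
        by (simp add: inner_diff_left algebra_simps)
      then show ?thesis using m0[of u] by (meson ereal_less_eq(3) order_trans)
    qed simp
    ultimately show ?thesis using that by blast
  qed
qed

lemma conj_conj_ge:
  fixes h :: "'a::euclidean_space \<Rightarrow> ereal"
  assumes "proper_fun h" "lsc_fun h" "convex_fun h"
  shows "h x \<le> conj (conj h) x"
proof (rule ccontr)
  assume "\<not> h x \<le> conj (conj h) x"
  then obtain t where t: "conj (conj h) x < ereal t" "ereal t < h x"
    using ereal_dense2[of "conj (conj h) x" "h x"] by (auto simp: not_le)
  obtain a \<beta> where m: "\<And>u. ereal (a \<bullet> u + \<beta>) \<le> h u" "t < a \<bullet> x + \<beta>"
    using exists_affine_minorant[OF assms t(2)] by blast
  have "conj h a \<le> ereal (- \<beta>)"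
    unfolding conj_def
  proof (rule SUP_least)
    fix u show "ereal (a \<bullet> u) - h u \<le> ereal (- \<beta>)"
      using m(1)[of u] by (cases "h u") auto
  qed
  then have "ereal (x \<bullet> a) - ereal (- \<beta>) \<le> ereal (x \<bullet> a) - conj h a"
    using conj_neq_minf[OF assms(1), of a] by (cases "conj h a") auto
  also have "\<dots> \<le> conj (conj h) x" by (rule fenchel_young)
  finally have "ereal (a \<bullet> x + \<beta>) \<le> conj (conj h) x" by (simp add: inner_commute)
  moreover have "ereal t < ereal (a \<bullet> x + \<beta>)" using m(2) by simp
  ultimately have "ereal t < conj (conj h) x" by (rule less_le_trans[rotated])
  with t(1) show False by simp
qed

lemma conj_conj_eq_of_csubdiff:
  fixes h :: "'a::euclidean_space \<Rightarrow> ereal"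
  assumes "proper_fun h" "lsc_fun h" "convex_fun h" and v: "v \<in> csubdiff (conj h) q"
  shows "h v = ereal (v \<bullet> q) - conj h q"
proof (rule antisym)
  show "h v \<le> ereal (v \<bullet> q) - conj h q"
    using conj_conj_ge[OF assms(1-3), of v] conj_eq_of_csubdiff[OF v] by simp
  obtain c where "conj h q = ereal c" using v unfolding csubdiff_def by (cases "conj h q") auto
  then show "ereal (v \<bullet> q) - conj h q \<le> h v"
    using fenchel_young[of q v h] assms(1) unfolding proper_fun_def
    by (cases "h v") (auto simp: inner_commute)
qed

section \<open>Lagrange multipliers under a Slater condition\<close>

lemma rel_interior_min_linear_const:
  fixes D :: "'a::euclidean_space set"
  assumes "convex D" "xo \<in> rel_interior D" "\<And>x. x \<in> D \<Longrightarrow> a \<bullet> xo \<le> a \<bullet> x" "x \<in> D"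
  shows "a \<bullet> x = a \<bullet> xo"
proof -
  have "x \<in> affine hull D" using assms(4) by (rule hull_inc)
  then obtain e where e: "e > 1" "(1 - e) *\<^sub>R x + e *\<^sub>R xo \<in> D"
    using convex_rel_interior_if2[OF assms(1,2)] by blast
  then have "a \<bullet> xo \<le> (1 - e) * (a \<bullet> x) + e * (a \<bullet> xo)"
    using assms(3)[OF e(2)] by (simp add: inner_add_right)
  then have "(e - 1) * (a \<bullet> x) \<le> (e - 1) * (a \<bullet> xo)" by (simp add: algebra_simps)
  then have "a \<bullet> x \<le> a \<bullet> xo" using e(1) by simp
  then show ?thesis using assms(3,4) by (simp add: order_antisym)
qed

lemma supporting_line_at_min:
  fixes V :: "(real \<times> real) set"
  assumes "convex V" "(t0, u0) \<in> V" "(t0 + 1, u0) \<in> V" "\<And>t. (t, u0) \<in> V \<Longrightarrow> t0 \<le> t"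
  shows "\<exists>\<mu> \<nu>. (\<mu>, \<nu>) \<noteq> 0 \<and> (\<forall>t u. (t, u) \<in> V \<longrightarrow> \<mu> * t0 + \<nu> * u0 \<le> \<mu> * t + \<nu> * u)"
proof -
  have "(t0, u0) \<notin> rel_interior V"
  proof
    assume "(t0, u0) \<in> rel_interior V"
    moreover have "(t0 + 1, u0) \<in> affine hull V" using assms(3) by (rule hull_inc)
    ultimately obtain e where "e > 1" "(1 - e) *\<^sub>R (t0 + 1, u0) + e *\<^sub>R (t0, u0) \<in> V"
      using convex_rel_interior_if2[OF assms(1)] by blast
    moreover have "(1 - e) *\<^sub>R (t0 + 1, u0) + e *\<^sub>R (t0, u0) = (t0 - (e - 1), u0)"
      by (simp add: algebra_simps)
    ultimately show False using assms(4)[of "t0 - (e - 1)"] by simp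
  qed
  then obtain w where "w \<noteq> 0" "\<And>y. y \<in> V \<Longrightarrow> w \<bullet> (t0, u0) \<le> w \<bullet> y"
    using supporting_hyperplane_rel_boundary[OF assms(1,2)] by metis
  moreover obtain \<mu> \<nu> where "w = (\<mu>, \<nu>)" by (cases w)
  ultimately show ?thesis by (intro exI[of _ \<mu>] exI[of _ \<nu>]) auto
qed

lemma lagrange_multiplier_eq:
  fixes D :: "'a::euclidean_space set"
  assumes D: "convex D" and xs: "xs \<in> D" "a \<bullet> xs = \<beta>" and xo: "xo \<in> rel_interior D" "a \<bullet> xo = \<beta>"
    and opt: "\<And>x. x \<in> D \<Longrightarrow> a \<bullet> x = \<beta> \<Longrightarrow> c \<bullet> xs \<le> c \<bullet> x"
  obtains \<nu> where "\<And>x. x \<in> D \<Longrightarrow> c \<bullet> xs \<le> c \<bullet> x + \<nu> * (a \<bullet> x - \<beta>)"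
proof -
  define V where "V = (\<lambda>(x, r). (c \<bullet> x + r, a \<bullet> x)) ` (D \<times> {0..})"
  have "convex V"
    unfolding V_def using D
    by (intro convex_linear_image convex_Times) (auto intro!: linearI simp: algebra_simps inner_add_right)
  moreover have "(c \<bullet> xs, \<beta>) \<in> V" "(c \<bullet> xs + 1, \<beta>) \<in> V"
    unfolding V_def using xs by (auto intro!: image_eqI[where x="(xs, _)"])
  moreover have "c \<bullet> xs \<le> t" if "(t, \<beta>) \<in> V" for t
    using that opt unfolding V_def by force
  ultimately obtain \<mu> \<nu> where \<mu>\<nu>: "(\<mu>, \<nu>) \<noteq> 0"
      and sep: "\<And>t u. (t, u) \<in> V \<Longrightarrow> \<mu> * (c \<bullet> xs) + \<nu> * \<beta> \<le> \<mu> * t + \<nu> * u"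
    using supporting_line_at_min by blast
  have ineq: "\<mu> * (c \<bullet> xs) + \<nu> * \<beta> \<le> \<mu> * (c \<bullet> x + r) + \<nu> * (a \<bullet> x)" if "x \<in> D" "r \<ge> 0" for x r
    by (rule sep) (use that in \<open>auto simp: V_def intro!: image_eqI[where x="(x, r)"]\<close>)
  have "\<mu> \<ge> 0" using ineq[OF xs(1), of 1] xs(2) by (simp add: algebra_simps)
  show ?thesis
  proof (cases "\<mu> = 0")
    case True
    then have "\<nu> \<noteq> 0" using \<mu>\<nu> by (simp add: zero_prod_def)
    have "(\<nu> *\<^sub>R a) \<bullet> xo \<le> (\<nu> *\<^sub>R a) \<bullet> x" if "x \<in> D" for x
      using ineq[OF that order_refl] True xo(2) by simp
    then have "a \<bullet> x = \<beta>" if "x \<in> D" for x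
      using rel_interior_min_linear_const[OF D xo(1), of "\<nu> *\<^sub>R a" x] that \<open>\<nu> \<noteq> 0\<close> xo(2) by simp
    then show ?thesis using opt that[of 0] by simp
  next
    case False
    with \<open>\<mu> \<ge> 0\<close> have "\<mu> > 0" by simp
    have "c \<bullet> xs \<le> c \<bullet> x + \<nu> / \<mu> * (a \<bullet> x - \<beta>)" if "x \<in> D" for x
    proof -
      have "\<mu> * (c \<bullet> xs) \<le> \<mu> * (c \<bullet> x + \<nu> / \<mu> * (a \<bullet> x - \<beta>))"
        using ineq[OF that order_refl] \<open>\<mu> > 0\<close> by (simp add: algebra_simps)
      then show ?thesis using \<open>\<mu> > 0\<close> by simp
    qed
    then show ?thesis by (rule that)
  qed
qed

lemma lagrange_multiplier_le:
  fixes D :: "'a::euclidean_space set"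
  assumes D: "convex D" and xs: "xs \<in> D" "a \<bullet> xs \<le> \<beta>" and x2: "x2 \<in> D" "a \<bullet> x2 < \<beta>"
    and opt: "\<And>x. x \<in> D \<Longrightarrow> a \<bullet> x \<le> \<beta> \<Longrightarrow> c \<bullet> xs \<le> c \<bullet> x"
  obtains l where "l \<ge> 0" "\<And>x. x \<in> D \<Longrightarrow> c \<bullet> xs \<le> c \<bullet> x + l * (a \<bullet> x - \<beta>)"
proof -
  define V where "V = (\<lambda>((x, r), s). (c \<bullet> x + r, a \<bullet> x + s)) ` ((D \<times> {0..}) \<times> {0..})"
  have "convex V"
    unfolding V_def using D
    by (intro convex_linear_image convex_Times) (auto intro!: linearI simp: algebra_simps inner_add_right)
  moreover have "(c \<bullet> xs, \<beta>) \<in> V" "(c \<bullet> xs + 1, \<beta>) \<in> V"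
    unfolding V_def using xs by (auto intro!: image_eqI[where x="((xs, _), \<beta> - a \<bullet> xs)"])
  moreover have "c \<bullet> xs \<le> t" if "(t, \<beta>) \<in> V" for t
    using that opt unfolding V_def by force
  ultimately obtain \<mu> \<nu> where \<mu>\<nu>: "(\<mu>, \<nu>) \<noteq> 0"
      and sep: "\<And>t u. (t, u) \<in> V \<Longrightarrow> \<mu> * (c \<bullet> xs) + \<nu> * \<beta> \<le> \<mu> * t + \<nu> * u"
    using supporting_line_at_min by blast
  have ineq: "\<mu> * (c \<bullet> xs) + \<nu> * \<beta> \<le> \<mu> * (c \<bullet> x + r) + \<nu> * (a \<bullet> x + s)"
    if "x \<in> D" "r \<ge> 0" "s \<ge> 0" for x r s
    by (rule sep) (use that in \<open>auto simp: V_def intro!: image_eqI[where x="((x, r), s)"]\<close>)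
  have "\<mu> \<ge> 0" using ineq[OF xs(1), of 1 "\<beta> - a \<bullet> xs"] xs(2) by (simp add: algebra_simps)
  have "\<nu> \<ge> 0" using ineq[OF xs(1), of 0 "\<beta> - a \<bullet> xs + 1"] xs(2) by (simp add: algebra_simps)
  have "\<mu> \<noteq> 0"
  proof
    assume "\<mu> = 0"
    \<comment> \<open>then \<open>x2\<close> would violate the separation, as it satisfies the constraint strictly\<close>
    then have "\<nu> * (\<beta> - a \<bullet> x2) \<le> 0" using ineq[OF x2(1), of 0 0] by (simp add: algebra_simps)
    then have "\<nu> = 0" using x2(2) \<open>\<nu> \<ge> 0\<close> by (simp add: mult_le_0_iff)
    then show False using \<open>\<mu> = 0\<close> \<mu>\<nu> by (simp add: zero_prod_def)
  qed
  with \<open>\<mu> \<ge> 0\<close> have "\<mu> > 0" by simp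
  have "c \<bullet> xs \<le> c \<bullet> x + \<nu> / \<mu> * (a \<bullet> x - \<beta>)" if "x \<in> D" for x
  proof -
    have "\<mu> * (c \<bullet> xs) \<le> \<mu> * (c \<bullet> x + \<nu> / \<mu> * (a \<bullet> x - \<beta>))"
      using ineq[OF that order_refl order_refl] \<open>\<mu> > 0\<close> by (simp add: algebra_simps)
    then show ?thesis using \<open>\<mu> > 0\<close> by simp
  qed
  then show ?thesis using that[of "\<nu> / \<mu>"] \<open>\<mu> > 0\<close> \<open>\<nu> \<ge> 0\<close> by simp
qed

definition has_lagrange_multipliers ::
  "('i \<Rightarrow> 'a::real_inner) \<Rightarrow> ('i \<Rightarrow> real) \<Rightarrow> 'i set \<Rightarrow> 'a set \<Rightarrow> 'a \<Rightarrow> 'a \<Rightarrow> bool" where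
  "has_lagrange_multipliers a \<beta> R D c xs \<longleftrightarrow>
     (\<exists>l. (\<forall>k\<in>R. 0 \<le> l k) \<and> (\<forall>x\<in>D. c \<bullet> xs \<le> c \<bullet> x + (\<Sum>k\<in>R. l k * (a k \<bullet> x - \<beta> k))))"

lemma lagrangian_eq_affine:
  "c \<bullet> x + (\<Sum>k\<in>R. l k * (a k \<bullet> x - \<beta> k)) = (c + (\<Sum>k\<in>R. l k *\<^sub>R a k)) \<bullet> x - (\<Sum>k\<in>R. l k * \<beta> k)"
  by (simp add: inner_add_left inner_sum_left sum_subtractf right_diff_distrib)

lemma lagrangian_penalty_nonpos:
  "\<forall>k\<in>R. 0 \<le> l k \<Longrightarrow> \<forall>k\<in>R. a k \<bullet> x \<le> \<beta> k \<Longrightarrow> (\<Sum>k\<in>R. l k * (a k \<bullet> x - \<beta> k)) \<le> 0"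
  by (intro sum_nonpos) (simp add: mult_nonneg_nonpos)

lemma has_lagrange_multipliers_insertI:
  assumes "finite R" "k0 \<notin> R" "\<forall>k\<in>R. 0 \<le> l k" "0 \<le> l0"
    and "\<And>x. x \<in> D \<Longrightarrow> c \<bullet> xs \<le> c \<bullet> x + (\<Sum>k\<in>R. l k * (a k \<bullet> x - \<beta> k)) + l0 * (a k0 \<bullet> x - \<beta> k0)"
  shows "has_lagrange_multipliers a \<beta> (insert k0 R) D c xs"
proof -
  have "(\<Sum>k\<in>insert k0 R. (l(k0 := l0)) k * (a k \<bullet> x - \<beta> k))
      = (\<Sum>k\<in>R. l k * (a k \<bullet> x - \<beta> k)) + l0 * (a k0 \<bullet> x - \<beta> k0)" for x
  proof -
    have "(\<Sum>k\<in>R. (l(k0 := l0)) k * (a k \<bullet> x - \<beta> k)) = (\<Sum>k\<in>R. l k * (a k \<bullet> x - \<beta> k))"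
      using assms(2) by (intro sum.cong) auto
    then show ?thesis using assms(1,2) by simp
  qed
  then show ?thesis
    unfolding has_lagrange_multipliers_def using assms(3-5)
    by (intro exI[of _ "l(k0 := l0)"]) (auto simp: add.assoc)
qed

lemma rel_interior_Int_halfspace:
  fixes D :: "'a::euclidean_space set"
  assumes "convex D" "x \<in> rel_interior D" "a \<bullet> x < b"
  shows "x \<in> rel_interior (D \<inter> {y. a \<bullet> y \<le> b})"
proof (cases "a = 0")
  case True
  then show ?thesis using assms(2,3) by simp
next
  case False
  then have "x \<in> rel_interior {y. a \<bullet> y \<le> b}"
    using interior_subset_rel_interior[of "{y. a \<bullet> y \<le> b}"] assms(3) by auto
  then show ?thesis
    using convex_rel_interior_inter_two[OF assms(1) convex_halfspace_le] assms(2) by auto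
qed

lemma has_lagrange_multipliers_insert_strict:
  fixes a :: "'i \<Rightarrow> 'a::euclidean_space"
  assumes R: "finite R" "k0 \<notin> R" and D: "convex D" and x2: "x2 \<in> D" "a k0 \<bullet> x2 < \<beta> k0"
    and xs: "xs \<in> D" "\<forall>k\<in>insert k0 R. a k \<bullet> xs \<le> \<beta> k"
    and IH: "has_lagrange_multipliers a \<beta> R (D \<inter> {x. a k0 \<bullet> x \<le> \<beta> k0}) c xs"
  shows "has_lagrange_multipliers a \<beta> (insert k0 R) D c xs"
proof -
  obtain l where l: "\<forall>k\<in>R. 0 \<le> l k"
    "\<And>x. x \<in> D \<Longrightarrow> a k0 \<bullet> x \<le> \<beta> k0 \<Longrightarrow> c \<bullet> xs \<le> c \<bullet> x + (\<Sum>k\<in>R. l k * (a k \<bullet> x - \<beta> k))"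
    using IH unfolding has_lagrange_multipliers_def by auto
  define c1 where "c1 = c + (\<Sum>k\<in>R. l k *\<^sub>R a k)"
  define d1 where "d1 = (\<Sum>k\<in>R. l k * \<beta> k)"
  have L: "c \<bullet> x + (\<Sum>k\<in>R. l k * (a k \<bullet> x - \<beta> k)) = c1 \<bullet> x - d1" for x
    unfolding c1_def d1_def by (rule lagrangian_eq_affine)
  have xs_val: "c \<bullet> xs = c1 \<bullet> xs - d1"
    using l(2)[OF xs(1)] lagrangian_penalty_nonpos[OF l(1), of a xs \<beta>] xs(2) L[of xs] by simp
  have "c1 \<bullet> xs \<le> c1 \<bullet> x" if "x \<in> D" "a k0 \<bullet> x \<le> \<beta> k0" for x
    using l(2)[OF that] L[of x] xs_val by simp
  then obtain l0 where "l0 \<ge> 0" "\<And>x. x \<in> D \<Longrightarrow> c1 \<bullet> xs \<le> c1 \<bullet> x + l0 * (a k0 \<bullet> x - \<beta> k0)"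
    using lagrange_multiplier_le[OF D xs(1) _ x2, of c1] xs(2) by auto
  then show ?thesis
    using L xs_val by (intro has_lagrange_multipliers_insertI[OF R l(1)]) auto
qed

lemma has_lagrange_multipliers_insert_tight:
  fixes a :: "'i \<Rightarrow> 'a::euclidean_space"
  assumes R: "finite R" "k0 \<notin> R" and D: "convex D" and xo: "xo \<in> rel_interior D" "a k0 \<bullet> xo = \<beta> k0"
    and xs: "xs \<in> D" "a k0 \<bullet> xs = \<beta> k0" "\<forall>k\<in>R. a k \<bullet> xs \<le> \<beta> k"
    and IH_eq: "has_lagrange_multipliers a \<beta> R (D \<inter> {x. a k0 \<bullet> x = \<beta> k0}) c xs"
    and IH_obj: "has_lagrange_multipliers a \<beta> R D (a k0) xo"
  shows "has_lagrange_multipliers a \<beta> (insert k0 R) D c xs"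
proof -
  obtain l where l: "\<forall>k\<in>R. 0 \<le> l k"
    "\<And>x. x \<in> D \<Longrightarrow> a k0 \<bullet> x = \<beta> k0 \<Longrightarrow> c \<bullet> xs \<le> c \<bullet> x + (\<Sum>k\<in>R. l k * (a k \<bullet> x - \<beta> k))"
    using IH_eq unfolding has_lagrange_multipliers_def by auto
  define c1 where "c1 = c + (\<Sum>k\<in>R. l k *\<^sub>R a k)"
  define d1 where "d1 = (\<Sum>k\<in>R. l k * \<beta> k)"
  have L: "c \<bullet> x + (\<Sum>k\<in>R. l k * (a k \<bullet> x - \<beta> k)) = c1 \<bullet> x - d1" for x
    unfolding c1_def d1_def by (rule lagrangian_eq_affine)
  have xs_val: "c \<bullet> xs = c1 \<bullet> xs - d1"
    using l(2)[OF xs(1,2)] lagrangian_penalty_nonpos[OF l(1) xs(3)] L[of xs] by simp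
  have "c1 \<bullet> xs \<le> c1 \<bullet> x" if "x \<in> D" "a k0 \<bullet> x = \<beta> k0" for x
    using l(2)[OF that] L[of x] xs_val by simp
  then obtain \<nu> where \<nu>: "\<And>x. x \<in> D \<Longrightarrow> c1 \<bullet> xs \<le> c1 \<bullet> x + \<nu> * (a k0 \<bullet> x - \<beta> k0)"
    using lagrange_multiplier_eq[OF D xs(1,2) xo] by blast
  show ?thesis
  proof (cases "\<nu> \<ge> 0")
    case True
    then show ?thesis
      using L xs_val \<nu> by (intro has_lagrange_multipliers_insertI[OF R l(1)]) auto
  next
    case False
    \<comment> \<open>A negative multiplier of the tight constraint is traded for multipliers of the others,
      which force \<open>a k0 \<bullet> x \<ge> \<beta> k0\<close> on the feasible part of \<open>D\<close>.\<close>
    obtain l' where l': "\<forall>k\<in>R. 0 \<le> l' k"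
      "\<And>x. x \<in> D \<Longrightarrow> a k0 \<bullet> xo \<le> a k0 \<bullet> x + (\<Sum>k\<in>R. l' k * (a k \<bullet> x - \<beta> k))"
      using IH_obj unfolding has_lagrange_multipliers_def by auto
    have bound: "\<nu> * (a k0 \<bullet> x - \<beta> k0) \<le> (- \<nu>) * (\<Sum>k\<in>R. l' k * (a k \<bullet> x - \<beta> k))"
      if "x \<in> D" for x
    proof -
      have "\<beta> k0 - a k0 \<bullet> x \<le> (\<Sum>k\<in>R. l' k * (a k \<bullet> x - \<beta> k))" using l'(2)[OF that] xo(2) by simp
      then have "(- \<nu>) * (\<beta> k0 - a k0 \<bullet> x) \<le> (- \<nu>) * (\<Sum>k\<in>R. l' k * (a k \<bullet> x - \<beta> k))"
        using False by (intro mult_left_mono) auto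
      then show ?thesis by (simp add: algebra_simps)
    qed
    have combined: "(\<Sum>k\<in>R. (l k + (- \<nu>) * l' k) * (a k \<bullet> x - \<beta> k))
        = (\<Sum>k\<in>R. l k * (a k \<bullet> x - \<beta> k)) + (- \<nu>) * (\<Sum>k\<in>R. l' k * (a k \<bullet> x - \<beta> k))" for x
    proof -
      have "(\<Sum>k\<in>R. (l k + (- \<nu>) * l' k) * (a k \<bullet> x - \<beta> k))
          = (\<Sum>k\<in>R. l k * (a k \<bullet> x - \<beta> k) + (- \<nu>) * (l' k * (a k \<bullet> x - \<beta> k)))"
        by (intro sum.cong) (auto simp: algebra_simps)
      then show ?thesis by (simp only: sum.distrib sum_distrib_left)
    qed
    have nonneg: "\<forall>k\<in>R. 0 \<le> l k + (- \<nu>) * l' k"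
    proof
      fix k assume "k \<in> R"
      then have "0 \<le> l k" "0 \<le> (- \<nu>) * l' k" using l(1) l'(1) False by (simp_all add: mult_nonpos_nonneg)
      then show "0 \<le> l k + (- \<nu>) * l' k" by simp
    qed
    have lag: "c \<bullet> xs \<le> c \<bullet> x + (\<Sum>k\<in>R. (l k + (- \<nu>) * l' k) * (a k \<bullet> x - \<beta> k)) + 0 * (a k0 \<bullet> x - \<beta> k0)"
      if "x \<in> D" for x
      using \<nu>[OF that] bound[OF that] L[of x] xs_val combined[of x] by simp
    show ?thesis by (rule has_lagrange_multipliers_insertI[OF R nonneg order_refl lag])
  qed
qed

lemma linear_bound_from_rel_interior:
  fixes a :: "'i \<Rightarrow> 'a::euclidean_space"
  assumes D: "convex D" and xo: "xo \<in> rel_interior D" "\<forall>k\<in>R. a k \<bullet> xo \<le> \<beta> k" "a0 \<bullet> xo \<le> b0"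
    and ri: "\<And>x. x \<in> rel_interior D \<Longrightarrow> \<forall>k\<in>R. a k \<bullet> x \<le> \<beta> k \<Longrightarrow> b0 \<le> a0 \<bullet> x"
    and x: "x \<in> D" "\<forall>k\<in>R. a k \<bullet> x \<le> \<beta> k"
  shows "b0 \<le> a0 \<bullet> x"
proof -
  define m where "m = x - (1/2) *\<^sub>R (x - xo)"
  have "m \<in> rel_interior D" unfolding m_def by (rule rel_interior_convex_shrink[OF D xo(1) x(1)]) auto
  moreover have m: "m = (1/2) *\<^sub>R x + (1/2) *\<^sub>R xo" unfolding m_def by (simp add: algebra_simps flip: scaleR_add_left)
  moreover have "\<forall>k\<in>R. a k \<bullet> m \<le> \<beta> k"
  proof
    fix k assume "k \<in> R"
    then have "a k \<bullet> x \<le> \<beta> k" "a k \<bullet> xo \<le> \<beta> k" using x(2) xo(2) by auto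
    then show "a k \<bullet> m \<le> \<beta> k" unfolding m by (simp add: inner_add_right)
  qed
  ultimately have "b0 \<le> a0 \<bullet> m" using ri by blast
  then show ?thesis using xo(3) unfolding m by (simp add: inner_add_right)
qed

lemma lagrange_multipliers_exist:
  fixes a :: "'i \<Rightarrow> 'a::euclidean_space"
  assumes "finite R" "convex D" "xo \<in> rel_interior D" "\<forall>k\<in>R. a k \<bullet> xo \<le> \<beta> k"
    "xs \<in> D" "\<forall>k\<in>R. a k \<bullet> xs \<le> \<beta> k" "\<forall>x\<in>D. (\<forall>k\<in>R. a k \<bullet> x \<le> \<beta> k) \<longrightarrow> c \<bullet> xs \<le> c \<bullet> x"
  shows "has_lagrange_multipliers a \<beta> R D c xs"
  using assms
proof (induction R arbitrary: D c xs xo rule: finite_induct)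
  case empty
  then show ?case by (simp add: has_lagrange_multipliers_def)
next
  case (insert k0 R)
  note D = insert.prems(1) and xo = insert.prems(2,3) and xs = insert.prems(4,5) and opt = insert.prems(6)
  have xoD: "xo \<in> D" using xo(1) rel_interior_subset by blast
  show ?case
  proof (cases "\<exists>x2\<in>rel_interior D. (\<forall>k\<in>R. a k \<bullet> x2 \<le> \<beta> k) \<and> a k0 \<bullet> x2 < \<beta> k0")
    case True
    then obtain x2 where x2: "x2 \<in> rel_interior D" "\<forall>k\<in>R. a k \<bullet> x2 \<le> \<beta> k" "a k0 \<bullet> x2 < \<beta> k0" by blast
    have "has_lagrange_multipliers a \<beta> R (D \<inter> {x. a k0 \<bullet> x \<le> \<beta> k0}) c xs"
      using x2 xs opt
      by (intro insert.IH[where xo=x2] convex_Int D convex_halfspace_le rel_interior_Int_halfspace) auto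
    then show ?thesis
      using x2 xs rel_interior_subset
      by (intro has_lagrange_multipliers_insert_strict[OF insert.hyps D, of x2]) auto
  next
    case False
    \<comment> \<open>The constraint \<open>k0\<close> is then active on all of the feasible part of \<open>D\<close>.\<close>
    have ge: "\<beta> k0 \<le> a k0 \<bullet> x" if "x \<in> D" "\<forall>k\<in>R. a k \<bullet> x \<le> \<beta> k" for x
      by (rule linear_bound_from_rel_interior[where a = a and \<beta> = \<beta>, OF D xo(1)])
        (use xo(2) False that in \<open>auto simp: not_less\<close>)
    have xo0: "a k0 \<bullet> xo = \<beta> k0" using ge[OF xoD] xo(2) by (simp add: order_antisym)
    have xs0: "a k0 \<bullet> xs = \<beta> k0" using ge[OF xs(1)] xs(2) by (simp add: order_antisym)
    have "rel_interior (D \<inter> {x. a k0 \<bullet> x = \<beta> k0}) = rel_interior D \<inter> {x. a k0 \<bullet> x = \<beta> k0}"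
      using xo(1) xo0 by (intro convex_affine_rel_interior_Int[OF D affine_hyperplane]) auto
    then have IH_eq: "has_lagrange_multipliers a \<beta> R (D \<inter> {x. a k0 \<bullet> x = \<beta> k0}) c xs"
      using xo xo0 xs xs0 opt
      by (intro insert.IH[where xo=xo] convex_Int D convex_hyperplane) auto
    moreover have IH_obj: "has_lagrange_multipliers a \<beta> R D (a k0) xo"
      using xo xoD xo0 ge by (intro insert.IH[where xo=xo] D) auto
    moreover have "\<forall>k\<in>R. a k \<bullet> xs \<le> \<beta> k" using xs(2) by simp
    ultimately show ?thesis
      using has_lagrange_multipliers_insert_tight[where a=a and \<beta>=\<beta>, OF insert.hyps D xo(1) xo0 xs(1) xs0]
      by blast
  qed
qed

definition mixed_feasible :: "('i \<Rightarrow> 'a::real_inner) \<Rightarrow> ('i \<Rightarrow> real) \<Rightarrow> ('i \<Rightarrow> bool) \<Rightarrow> 'i set \<Rightarrow> 'a \<Rightarrow> bool" where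
  "mixed_feasible a \<beta> eqc R x \<longleftrightarrow> (\<forall>k\<in>R. a k \<bullet> x \<le> \<beta> k \<and> (eqc k \<longrightarrow> a k \<bullet> x = \<beta> k))"

definition halfspaces :: "('a::real_inner \<times> real) set \<Rightarrow> 'a set" where
  "halfspaces H = {x. \<forall>(w, t)\<in>H. w \<bullet> x \<le> t}"

text \<open>Equality constraints are split into two inequalities; the multipliers of the
  constraints in \<open>H\<close> are dropped, as they only contribute nonpositive terms on \<open>halfspaces H\<close>.\<close>

lemma lagrange_multipliers_mixed:
  fixes a :: "'i \<Rightarrow> 'a::euclidean_space"
  assumes fin: "finite R" "finite H" and D: "convex D"
    and xo: "xo \<in> rel_interior D" "xo \<in> halfspaces H" "mixed_feasible a \<beta> eqc R xo"
    and xs: "xs \<in> D" "xs \<in> halfspaces H" "mixed_feasible a \<beta> eqc R xs"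
    and opt: "\<And>x. x \<in> D \<Longrightarrow> x \<in> halfspaces H \<Longrightarrow> mixed_feasible a \<beta> eqc R x \<Longrightarrow> c \<bullet> xs \<le> c \<bullet> x"
  obtains l where "\<And>k. k \<in> R \<Longrightarrow> \<not> eqc k \<Longrightarrow> 0 \<le> l k"
    "\<And>x. x \<in> D \<Longrightarrow> x \<in> halfspaces H \<Longrightarrow> c \<bullet> xs \<le> c \<bullet> x + (\<Sum>k\<in>R. l k * (a k \<bullet> x - \<beta> k))"
proof -
  define a' :: "'i \<times> bool + 'a \<times> real \<Rightarrow> 'a" where
    "a' j = (case j of Inl (k, b) \<Rightarrow> if b then a k else if eqc k then - a k else 0 | Inr (w, t) \<Rightarrow> w)" for j
  define \<beta>' :: "'i \<times> bool + 'a \<times> real \<Rightarrow> real" where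
    "\<beta>' j = (case j of Inl (k, b) \<Rightarrow> if b then \<beta> k else if eqc k then - \<beta> k else 0 | Inr (w, t) \<Rightarrow> t)" for j
  define R' where "R' = (R \<times> (UNIV :: bool set)) <+> H"
  have feas: "(\<forall>j\<in>R'. a' j \<bullet> x \<le> \<beta>' j) \<longleftrightarrow> mixed_feasible a \<beta> eqc R x \<and> x \<in> halfspaces H" for x
  proof -
    have "(\<forall>j\<in>R'. a' j \<bullet> x \<le> \<beta>' j) \<longleftrightarrow> (\<forall>k\<in>R. \<forall>b. a' (Inl (k, b)) \<bullet> x \<le> \<beta>' (Inl (k, b))) \<and>
        (\<forall>p\<in>H. a' (Inr p) \<bullet> x \<le> \<beta>' (Inr p))"
      unfolding R'_def Plus_def by blast
    also have "\<dots> \<longleftrightarrow> mixed_feasible a \<beta> eqc R x \<and> x \<in> halfspaces H"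
      unfolding a'_def \<beta>'_def mixed_feasible_def halfspaces_def all_bool_eq
      by (auto intro: order_antisym)
    finally show ?thesis .
  qed
  have "finite R'" unfolding R'_def using fin by simp
  then have "has_lagrange_multipliers a' \<beta>' R' D c xs"
    using D xo xs opt by (intro lagrange_multipliers_exist) (auto simp: feas)
  then obtain l' where l': "\<forall>j\<in>R'. 0 \<le> l' j"
      "\<forall>x\<in>D. c \<bullet> xs \<le> c \<bullet> x + (\<Sum>j\<in>R'. l' j * (a' j \<bullet> x - \<beta>' j))"
    unfolding has_lagrange_multipliers_def by blast
  define l where "l k = l' (Inl (k, True)) - (if eqc k then l' (Inl (k, False)) else 0)" for k
  have bound: "(\<Sum>j\<in>R'. l' j * (a' j \<bullet> x - \<beta>' j)) \<le> (\<Sum>k\<in>R. l k * (a k \<bullet> x - \<beta> k))"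
    if "x \<in> halfspaces H" for x
  proof -
    have "(\<Sum>p\<in>R \<times> UNIV. l' (Inl p) * (a' (Inl p) \<bullet> x - \<beta>' (Inl p)))
        = (\<Sum>k\<in>R. \<Sum>b\<in>{False, True}. l' (Inl (k, b)) * (a' (Inl (k, b)) \<bullet> x - \<beta>' (Inl (k, b))))"
      unfolding sum.cartesian_product' UNIV_bool ..
    also have "\<dots> = (\<Sum>k\<in>R. l k * (a k \<bullet> x - \<beta> k))"
      unfolding l_def a'_def \<beta>'_def by (intro sum.cong) (auto simp: algebra_simps)
    finally have "(\<Sum>p\<in>R \<times> UNIV. l' (Inl p) * (a' (Inl p) \<bullet> x - \<beta>' (Inl p))) = (\<Sum>k\<in>R. l k * (a k \<bullet> x - \<beta> k))" .
    moreover have "(\<Sum>p\<in>H. l' (Inr p) * (a' (Inr p) \<bullet> x - \<beta>' (Inr p))) \<le> 0"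
    proof (intro sum_nonpos)
      fix p assume "p \<in> H"
      then have "0 \<le> l' (Inr p)" "a' (Inr p) \<bullet> x \<le> \<beta>' (Inr p)"
        using l'(1) that unfolding R'_def a'_def \<beta>'_def halfspaces_def by (auto split: prod.splits)
      then show "l' (Inr p) * (a' (Inr p) \<bullet> x - \<beta>' (Inr p)) \<le> 0" by (simp add: mult_nonneg_nonpos)
    qed
    ultimately show ?thesis unfolding R'_def using fin by (simp add: sum.Plus comp_def)
  qed
  show ?thesis
  proof (rule that)
    show "0 \<le> l k" if "k \<in> R" "\<not> eqc k" for k
      using l'(1) that unfolding l_def R'_def by auto
    show "c \<bullet> xs \<le> c \<bullet> x + (\<Sum>k\<in>R. l k * (a k \<bullet> x - \<beta> k))" if "x \<in> D" "x \<in> halfspaces H" for x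
      using l'(2) that(1) bound[OF that(2)] by fastforce
  qed
qed

lemma slater_dom_subset_edom: "slater_dom h \<subseteq> edom h"
  unfolding slater_dom_def using rel_interior_subset by auto

definition slater_epigraph :: "('a::euclidean_space \<Rightarrow> ereal) \<Rightarrow> ('a \<times> real) set" where
  "slater_epigraph \<phi> = (if polyhedral_fun \<phi> then UNIV else epigraph \<phi>)"

lemma convex_slater_epigraph: "convex_fun \<phi> \<Longrightarrow> convex (slater_epigraph \<phi>)"
  unfolding slater_epigraph_def convex_fun_def by simp

lemma epigraph_eq_Int_halfspaces:
  fixes \<phi> :: "'a::euclidean_space \<Rightarrow> ereal"
  obtains H where "finite H" "epigraph \<phi> = slater_epigraph \<phi> \<inter> halfspaces H"
proof (cases "polyhedral_fun \<phi>")
  case True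
  then obtain F where F: "finite F" "epigraph \<phi> = \<Inter>F" "\<forall>h\<in>F. \<exists>a b. a \<noteq> 0 \<and> h = {x. a \<bullet> x \<le> b}"
    unfolding polyhedral_fun_def polyhedron_def by blast
  have ex: "\<forall>h\<in>F. \<exists>p. h = {x. fst p \<bullet> x \<le> snd p}"
  proof
    fix h assume "h \<in> F"
    then obtain a b where "h = {x. a \<bullet> x \<le> b}" using F(3) by blast
    then show "\<exists>p. h = {x. fst p \<bullet> x \<le> snd p}" by (intro exI[of _ "(a, b)"]) simp
  qed
  obtain P where P: "\<forall>h\<in>F. h = {x. fst (P h) \<bullet> x \<le> snd (P h)}" using bchoice[OF ex] by blast
  then have "x \<in> h \<longleftrightarrow> fst (P h) \<bullet> x \<le> snd (P h)" if "h \<in> F" for x h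
    using that by blast
  then have "halfspaces (P ` F) = \<Inter>F"
    unfolding halfspaces_def by (auto simp: case_prod_beta)
  then show ?thesis using that[of "P ` F"] F(1,2) True by (simp add: slater_epigraph_def)
next
  case False
  then show ?thesis using that[of "{}"] by (simp add: halfspaces_def slater_epigraph_def)
qed

lemma rel_interior_epigraph:
  fixes \<phi> :: "'a::euclidean_space \<Rightarrow> ereal"
  assumes "convex_fun \<phi>" "\<And>x. \<phi> x \<noteq> -\<infinity>" "x \<in> rel_interior (edom \<phi>)" "real_of_ereal (\<phi> x) < t"
  shows "(x, t) \<in> rel_interior (epigraph \<phi>)"
proof -
  have fin: "\<exists>r. \<phi> y = ereal r" if "y \<in> edom \<phi>" for y
    using that assms(2)[of y] unfolding edom_def by (cases "\<phi> y") auto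
  have "{y. {s. (y, s) \<in> epigraph \<phi>} \<noteq> {}} = edom \<phi>"
  proof (intro set_eqI iffI)
    fix y assume "y \<in> {y. {s. (y, s) \<in> epigraph \<phi>} \<noteq> {}}"
    then show "y \<in> edom \<phi>" unfolding epigraph_def edom_def by (auto intro: le_less_trans)
  next
    fix y assume "y \<in> edom \<phi>"
    then obtain r where "\<phi> y = ereal r" using fin by blast
    then have "(y, r) \<in> epigraph \<phi>" unfolding epigraph_def by simp
    then show "y \<in> {y. {s. (y, s) \<in> epigraph \<phi>} \<noteq> {}}" by auto
  qed
  moreover have "{s. (x, s) \<in> epigraph \<phi>} = {real_of_ereal (\<phi> x)..}"
  proof -
    obtain r where "\<phi> x = ereal r" using fin assms(3) rel_interior_subset by blast
    then show ?thesis unfolding epigraph_def by auto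
  qed
  ultimately show ?thesis
    using rel_interior_projection[OF assms(1)[unfolded convex_fun_def] refl, of x t] assms(3,4) by simp
qed

lemma rel_interior_epigraph_of_slater_dom:
  fixes \<phi> :: "'a::euclidean_space \<Rightarrow> ereal"
  assumes "convex_fun \<phi>" "\<And>x. \<phi> x \<noteq> -\<infinity>" "x \<in> slater_dom \<phi>"
  shows "(x, real_of_ereal (\<phi> x) + 1) \<in> rel_interior (slater_epigraph \<phi>)"
  using assms rel_interior_epigraph[of \<phi> x "real_of_ereal (\<phi> x) + 1"]
  unfolding slater_dom_def slater_epigraph_def by auto

lemma epigraph_pair_eq_Int_halfspaces:
  fixes \<phi>1 :: "'a::euclidean_space \<Rightarrow> ereal" and \<phi>2 :: "'b::euclidean_space \<Rightarrow> ereal"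
  obtains H :: "(((('a \<times> real) \<times> ('b \<times> real)) \<times> 'c::euclidean_space) \<times> real) set"
  where "finite H" "\<And>x1 s1 x2 s2 x3. (((x1, s1), (x2, s2)), x3) \<in> (slater_epigraph \<phi>1 \<times> slater_epigraph \<phi>2) \<times> UNIV
    \<inter> halfspaces H \<longleftrightarrow> \<phi>1 x1 \<le> ereal s1 \<and> \<phi>2 x2 \<le> ereal s2"
proof -
  obtain H1 where H1: "finite H1" "epigraph \<phi>1 = slater_epigraph \<phi>1 \<inter> halfspaces H1"
    by (rule epigraph_eq_Int_halfspaces)
  obtain H2 where H2: "finite H2" "epigraph \<phi>2 = slater_epigraph \<phi>2 \<inter> halfspaces H2"
    by (rule epigraph_eq_Int_halfspaces)
  define H :: "(((('a \<times> real) \<times> ('b \<times> real)) \<times> 'c) \<times> real) set"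
    where "H = (\<lambda>(w, t). (((w, 0), 0), t)) ` H1 \<union> (\<lambda>(w, t). (((0, w), 0), t)) ` H2"
  have "(\<forall>x\<in>f ` A. P x) \<longleftrightarrow> (\<forall>x\<in>A. P (f x))" for f :: "'a \<times> real \<times> real \<Rightarrow> _" and A P
    by blast
  moreover have "(\<forall>x\<in>f ` A. P x) \<longleftrightarrow> (\<forall>x\<in>A. P (f x))" for f :: "('b \<times> real) \<times> real \<Rightarrow> _" and A P
    by blast
  ultimately have "(((x1, s1), (x2, s2)), x3) \<in> halfspaces H \<longleftrightarrow> (x1, s1) \<in> halfspaces H1 \<and> (x2, s2) \<in> halfspaces H2"
    for x1 s1 x2 s2 x3 unfolding H_def halfspaces_def by (simp add: case_prod_beta ball_Un)
  then have "(((x1, s1), (x2, s2)), x3) \<in> (slater_epigraph \<phi>1 \<times> slater_epigraph \<phi>2) \<times> UNIV \<inter> halfspaces H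
      \<longleftrightarrow> \<phi>1 x1 \<le> ereal s1 \<and> \<phi>2 x2 \<le> ereal s2" for x1 s1 x2 s2 x3
    using H1(2) H2(2) unfolding epigraph_def by blast
  moreover have "finite H" unfolding H_def using H1(1) H2(1) by simp
  ultimately show ?thesis using that by blast
qed

text \<open>The two blocks are lifted to their epigraphs; a polyhedral epigraph contributes its
  defining halfspaces as extra linear constraints instead of a relative-interior requirement.\<close>

lemma lagrange_multipliers_blocks:
  fixes \<phi>1 :: "'a::euclidean_space \<Rightarrow> ereal" and \<phi>2 :: "'b::euclidean_space \<Rightarrow> ereal"
    and a :: "'i::finite \<Rightarrow> ('a \<times> 'b) \<times> 'c::euclidean_space"
  assumes \<phi>1: "convex_fun \<phi>1" "\<And>x. \<phi>1 x \<noteq> -\<infinity>" and \<phi>2: "convex_fun \<phi>2" "\<And>x. \<phi>2 x \<noteq> -\<infinity>"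
    and xo: "x1o \<in> slater_dom \<phi>1" "x2o \<in> slater_dom \<phi>2" "mixed_feasible a \<beta> eqc UNIV ((x1o, x2o), x3o)"
    and xs: "mixed_feasible a \<beta> eqc UNIV ((x1s, x2s), x3s)"
    and opt: "\<And>x1 x2 x3. mixed_feasible a \<beta> eqc UNIV ((x1, x2), x3) \<Longrightarrow>
      \<phi>1 x1s + \<phi>2 x2s + ereal (c \<bullet> x3s) \<le> \<phi>1 x1 + \<phi>2 x2 + ereal (c \<bullet> x3)"
  obtains l where "\<And>k. \<not> eqc k \<Longrightarrow> 0 \<le> l k"
    "\<And>x1 x2 x3. \<phi>1 x1s + \<phi>2 x2s + ereal (c \<bullet> x3s)
       \<le> \<phi>1 x1 + \<phi>2 x2 + ereal (c \<bullet> x3 + (\<Sum>k\<in>UNIV. l k * (a k \<bullet> ((x1, x2), x3) - \<beta> k)))"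
proof -
  obtain r1o r2o where r1o: "\<phi>1 x1o = ereal r1o" and r2o: "\<phi>2 x2o = ereal r2o"
    using xo(1,2) slater_dom_subset_edom \<phi>1(2)[of x1o] \<phi>2(2)[of x2o] unfolding edom_def
    by (cases "\<phi>1 x1o"; cases "\<phi>2 x2o") auto
  obtain r1 r2 where r1: "\<phi>1 x1s = ereal r1" and r2: "\<phi>2 x2s = ereal r2"
    using opt[OF xo(3)] r1o r2o \<phi>1(2)[of x1s] \<phi>2(2)[of x2s]
    by (cases "\<phi>1 x1s"; cases "\<phi>2 x2s") auto
  obtain H :: "(((('a \<times> real) \<times> ('b \<times> real)) \<times> 'c) \<times> real) set" where H: "finite H"
    and epi: "\<And>x1 s1 x2 s2 x3. (((x1, s1), (x2, s2)), x3) \<in> (slater_epigraph \<phi>1 \<times> slater_epigraph \<phi>2) \<times> UNIV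
      \<inter> halfspaces H \<longleftrightarrow> \<phi>1 x1 \<le> ereal s1 \<and> \<phi>2 x2 \<le> ereal s2"
    by (rule epigraph_pair_eq_Int_halfspaces[of \<phi>1 \<phi>2]) (rule that)
  define D :: "((('a \<times> real) \<times> ('b \<times> real)) \<times> 'c) set"
    where "D = (slater_epigraph \<phi>1 \<times> slater_epigraph \<phi>2) \<times> UNIV"
  define A :: "'i \<Rightarrow> (('a \<times> real) \<times> ('b \<times> real)) \<times> 'c"
    where "A k = (((fst (fst (a k)), 0), (snd (fst (a k)), 0)), snd (a k))" for k
  define C :: "(('a \<times> real) \<times> ('b \<times> real)) \<times> 'c" where "C = (((0, 1), (0, 1)), c)"
  have A: "A k \<bullet> (((x1, s1), (x2, s2)), x3) = a k \<bullet> ((x1, x2), x3)" for k x1 s1 x2 s2 x3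
    unfolding A_def by (simp add: inner_prod_def)
  then have feas: "mixed_feasible A \<beta> eqc UNIV (((x1, s1), (x2, s2)), x3) \<longleftrightarrow> mixed_feasible a \<beta> eqc UNIV ((x1, x2), x3)"
    for x1 s1 x2 s2 x3 unfolding mixed_feasible_def by simp
  have C: "C \<bullet> (((x1, s1), (x2, s2)), x3) = s1 + s2 + c \<bullet> x3" for x1 s1 x2 s2 x3
    unfolding C_def by simp
  note epi = epi[folded D_def]
  have cD: "convex D"
    unfolding D_def using \<phi>1(1) \<phi>2(1) by (intro convex_Times convex_slater_epigraph) auto
  have xo_ri: "(((x1o, r1o + 1), (x2o, r2o + 1)), x3o) \<in> rel_interior D"
    using rel_interior_epigraph_of_slater_dom[OF \<phi>1 xo(1)] rel_interior_epigraph_of_slater_dom[OF \<phi>2 xo(2)]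
      convex_slater_epigraph[OF \<phi>1(1)] convex_slater_epigraph[OF \<phi>2(1)] r1o r2o
    unfolding D_def by (simp add: rel_interior_Times convex_Times)
  have xo_epi: "(((x1o, r1o + 1), (x2o, r2o + 1)), x3o) \<in> D \<inter> halfspaces H"
    unfolding epi using r1o r2o by simp
  have xs_epi: "(((x1s, r1), (x2s, r2)), x3s) \<in> D \<inter> halfspaces H"
    unfolding epi using r1 r2 by simp
  have opt_lifted: "C \<bullet> (((x1s, r1), (x2s, r2)), x3s) \<le> C \<bullet> \<xi>"
    if "\<xi> \<in> D" "\<xi> \<in> halfspaces H" "mixed_feasible A \<beta> eqc UNIV \<xi>" for \<xi>
  proof -
    obtain x1 s1 x2 s2 x3 where \<xi>: "\<xi> = (((x1, s1), (x2, s2)), x3)" by (metis prod.collapse)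
    have "ereal (r1 + r2 + c \<bullet> x3s) \<le> \<phi>1 x1 + \<phi>2 x2 + ereal (c \<bullet> x3)"
      using opt[of x1 x2 x3] that(3) r1 r2 unfolding \<xi> feas by simp
    also have "\<dots> \<le> ereal s1 + ereal s2 + ereal (c \<bullet> x3)"
    proof -
      have "\<phi>1 x1 \<le> ereal s1 \<and> \<phi>2 x2 \<le> ereal s2" using that(1,2) epi unfolding \<xi> by blast
      then show ?thesis by (intro add_mono) auto
    qed
    finally show ?thesis unfolding \<xi> C by simp
  qed
  obtain l where l: "\<And>k. k \<in> UNIV \<Longrightarrow> \<not> eqc k \<Longrightarrow> 0 \<le> l k"
    "\<And>\<xi>. \<xi> \<in> D \<Longrightarrow> \<xi> \<in> halfspaces H \<Longrightarrow>
       C \<bullet> (((x1s, r1), (x2s, r2)), x3s) \<le> C \<bullet> \<xi> + (\<Sum>k\<in>UNIV. l k * (A k \<bullet> \<xi> - \<beta> k))"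
    using xo_epi xs_epi xo(3) xs
    by (rule_tac lagrange_multipliers_mixed[OF finite_class.finite_UNIV H cD xo_ri _ _ _ _ _ opt_lifted]) (auto simp: feas)
  show ?thesis
  proof (rule that)
    show "0 \<le> l k" if "\<not> eqc k" for k using l(1) that by simp
  next
    fix x1 x2 x3
    show "\<phi>1 x1s + \<phi>2 x2s + ereal (c \<bullet> x3s)
       \<le> \<phi>1 x1 + \<phi>2 x2 + ereal (c \<bullet> x3 + (\<Sum>k\<in>UNIV. l k * (a k \<bullet> ((x1, x2), x3) - \<beta> k)))"
    proof (cases "\<phi>1 x1 = \<infinity> \<or> \<phi>2 x2 = \<infinity>")
      case True
      then show ?thesis using \<phi>1(2)[of x1] \<phi>2(2)[of x2] by auto
    next
      case False
      then obtain s1 s2 where s: "\<phi>1 x1 = ereal s1" "\<phi>2 x2 = ereal s2"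
        using \<phi>1(2)[of x1] \<phi>2(2)[of x2] by (cases "\<phi>1 x1"; cases "\<phi>2 x2") auto
      then have "(((x1, s1), (x2, s2)), x3) \<in> D \<inter> halfspaces H" unfolding epi by simp
      then show ?thesis using l(2)[of "(((x1, s1), (x2, s2)), x3)"] r1 r2 s unfolding A C by simp
    qed
  qed
qed

section \<open>Penalized problems\<close>

lemma ereal_add_right_cancel_le: "a + ereal c \<le> b + ereal c \<Longrightarrow> a \<le> b"
  by (cases a; cases b) auto

lemma local_min_add_imp_min_on:
  fixes H P :: "'a::real_normed_vector \<Rightarrow> ereal"
  assumes lm: "local_min (\<lambda>x. H x + P x) x0" and H: "convex_fun H" "H x0 < \<infinity>"
    and C: "convex C" "x0 \<in> C" "x \<in> C"
    and P: "P x0 = ereal p0" "eventually (\<lambda>y. y \<in> C \<longrightarrow> P y = P x0) (nhds x0)"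
  shows "H x0 \<le> H x"
proof -
  obtain e1 where e1: "e1 > 0" "\<And>y. dist y x0 < e1 \<Longrightarrow> H x0 + P x0 \<le> H y + P y"
    using lm unfolding local_min_def by blast
  obtain e2 where e2: "e2 > 0" "\<And>y. dist y x0 < e2 \<Longrightarrow> y \<in> C \<longrightarrow> P y = P x0"
    using P(2) unfolding eventually_nhds_metric by blast
  have "H x0 \<le> H y" if "y \<in> C" "dist y x0 < min e1 e2" for y
    using e1(2)[of y] e2(2)[of y] that P(1) by (auto intro: ereal_add_right_cancel_le)
  then show ?thesis
    using e1(1) e2(1) by (intro convex_fun_min_of_local_min[OF H C, of "min e1 e2"]) auto
qed

lemma local_min_add_penalty:
  fixes H P :: "'a::metric_space \<Rightarrow> ereal"
  assumes H: "H x0 = ereal h0" "eventually (\<lambda>x. ereal (h0 - m) < H x) (nhds x0)"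
    and P: "P x0 = ereal p0" "eventually (\<lambda>x. (P x = P x0 \<and> H x0 \<le> H x) \<or> ereal (p0 + m) \<le> P x) (nhds x0)"
  shows "local_min (\<lambda>x. H x + P x) x0"
proof -
  obtain e where e: "e > 0" "\<And>x. dist x x0 < e \<Longrightarrow>
      ereal (h0 - m) < H x \<and> ((P x = P x0 \<and> H x0 \<le> H x) \<or> ereal (p0 + m) \<le> P x)"
    using eventually_conj[OF H(2) P(2)] unfolding eventually_nhds_metric by blast
  have "H x0 + P x0 \<le> H x + P x" if "dist x x0 < e" for x
  proof (cases "P x = P x0 \<and> H x0 \<le> H x")
    case True
    then show ?thesis by (simp add: add_right_mono)
  next
    case False
    then have "ereal (h0 - m) + ereal (p0 + m) \<le> H x + P x"
      using e(2)[OF that] by (intro add_mono) auto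
    then show ?thesis using H(1) P(1) by simp
  qed
  then show ?thesis unfolding local_min_def using e(1) by blast
qed

definition pattern_feasible :: "bool \<Rightarrow> real^'r \<Rightarrow> real^'r \<Rightarrow> bool" where
  "pattern_feasible pos u0 u \<longleftrightarrow> (\<forall>i. u0 $ i = 0 \<longrightarrow> (if pos then u $ i \<le> 0 else u $ i = 0))"

definition penalty_support :: "bool \<Rightarrow> real^'r \<Rightarrow> 'r set" where
  "penalty_support pos u = {i. if pos then 0 < u $ i else u $ i \<noteq> 0}"

lemma Phi_eq_sum_penalty_support: "Phi pos lam u = (\<Sum>i\<in>penalty_support pos u. lam $ i)"
  unfolding Phi_def penalty_support_def by (cases pos) (simp_all add: sum.If_cases)

lemma pattern_feasible_iff_penalty_support:
  "pattern_feasible pos u0 u \<longleftrightarrow> {i. u0 $ i = 0} \<inter> penalty_support pos u = {}"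
  unfolding pattern_feasible_def penalty_support_def by (cases pos) auto

lemma eventually_sgn_stable:
  fixes F :: "'a \<Rightarrow> real^'r"
  assumes "(F \<longlongrightarrow> u0) net"
  shows "eventually (\<lambda>x. \<forall>i. u0 $ i \<noteq> 0 \<longrightarrow> sgn (F x $ i) = sgn (u0 $ i)) net"
proof (rule eventually_all_finite)
  fix i
  have F: "((\<lambda>x. F x $ i) \<longlongrightarrow> u0 $ i) net" using assms by (rule tendsto_vec_nth)
  consider "u0 $ i > 0" | "u0 $ i < 0" | "u0 $ i = 0" by linarith
  then show "eventually (\<lambda>x. u0 $ i \<noteq> 0 \<longrightarrow> sgn (F x $ i) = sgn (u0 $ i)) net"
  proof cases
    case 1
    then show ?thesis using order_tendstoD(1)[OF F 1] by (auto elim: eventually_mono)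
  next
    case 2
    then show ?thesis using order_tendstoD(2)[OF F 2] by (auto elim: eventually_mono)
  qed simp
qed

lemma Phi_sgn_stable:
  assumes "\<forall>i. u0 $ i \<noteq> 0 \<longrightarrow> sgn (u $ i) = sgn (u0 $ i)"
  shows "Phi pos lam u = Phi pos lam u0 + (\<Sum>i\<in>{i. u0 $ i = 0} \<inter> penalty_support pos u. lam $ i)"
proof -
  have same: "i \<in> penalty_support pos u \<longleftrightarrow> i \<in> penalty_support pos u0" if "u0 $ i \<noteq> 0" for i
  proof -
    have "sgn (u $ i) = sgn (u0 $ i)" using assms that by blast
    then have "(0 < u $ i \<longleftrightarrow> 0 < u0 $ i) \<and> (u $ i \<noteq> 0 \<longleftrightarrow> u0 $ i \<noteq> 0)"
      by (metis sgn_greater sgn_eq_0_iff)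
    then show ?thesis unfolding penalty_support_def by simp
  qed
  have "penalty_support pos u = penalty_support pos u0 \<union> ({i. u0 $ i = 0} \<inter> penalty_support pos u)"
  proof (intro set_eqI)
    fix i
    show "i \<in> penalty_support pos u \<longleftrightarrow> i \<in> penalty_support pos u0 \<union> ({i. u0 $ i = 0} \<inter> penalty_support pos u)"
      using same[of i] by (cases "u0 $ i = 0") (auto simp: penalty_support_def)
  qed
  moreover have "penalty_support pos u0 \<inter> ({i. u0 $ i = 0} \<inter> penalty_support pos u) = {}"
    unfolding penalty_support_def by auto
  ultimately show ?thesis
    unfolding Phi_eq_sum_penalty_support by (metis finite sum.union_disjoint)
qed

lemma Phi_sgn_stable_eq:
  assumes "\<forall>i. u0 $ i \<noteq> 0 \<longrightarrow> sgn (u $ i) = sgn (u0 $ i)" "pattern_feasible pos u0 u"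
  shows "Phi pos lam u = Phi pos lam u0"
  using Phi_sgn_stable[OF assms(1)] assms(2) unfolding pattern_feasible_iff_penalty_support by simp

lemma Phi_sgn_stable_jump:
  assumes "\<forall>i. u0 $ i \<noteq> 0 \<longrightarrow> sgn (u $ i) = sgn (u0 $ i)" "\<not> pattern_feasible pos u0 u"
    and "\<forall>i. 0 \<le> lam $ i" "\<forall>i. m \<le> lam $ i"
  shows "Phi pos lam u0 + m \<le> Phi pos lam u"
proof -
  obtain j where j: "j \<in> {i. u0 $ i = 0} \<inter> penalty_support pos u"
    using assms(2) unfolding pattern_feasible_iff_penalty_support by blast
  have "m \<le> (\<Sum>i\<in>{i. u0 $ i = 0} \<inter> penalty_support pos u. lam $ i)"
    using member_le_sum[OF j, of "\<lambda>i. lam $ i"] assms(3,4) by (meson finite order_trans)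
  then show ?thesis using Phi_sgn_stable[OF assms(1)] by simp
qed

lemma Psi_eq_Phi: "Psi pos mu z = ereal (Phi False mu z) + (if pos \<and> \<not> (\<forall>i. 0 \<le> z $ i) then \<infinity> else 0)"
  unfolding Psi_def Phi_def by simp

lemma Psi_sgn_stable_eq:
  assumes "\<forall>i. zs $ i \<noteq> 0 \<longrightarrow> sgn (z $ i) = sgn (zs $ i)" "pattern_feasible False zs z"
    and "pos \<longrightarrow> (\<forall>i. 0 \<le> zs $ i)"
  shows "Psi pos mu z = Psi pos mu zs"
proof -
  have z_nonneg: "0 \<le> z $ i" if pos for i
  proof (cases "zs $ i = 0")
    case True
    then show ?thesis using assms(2) unfolding pattern_feasible_def by simp
  next
    case False
    then have "0 < zs $ i" using assms(3) that by (simp add: order_less_le)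
    then have "0 < sgn (z $ i)" using assms(1) False by simp
    then show ?thesis by (simp add: sgn_greater)
  qed
  then show ?thesis
    using Phi_sgn_stable_eq[OF assms(1,2)] assms(3) unfolding Psi_eq_Phi by auto
qed

lemma Psi_sgn_stable_jump:
  assumes "\<forall>i. zs $ i \<noteq> 0 \<longrightarrow> sgn (z $ i) = sgn (zs $ i)" "\<not> pattern_feasible False zs z"
    and "pos \<longrightarrow> (\<forall>i. 0 \<le> zs $ i)" "\<forall>i. 0 \<le> mu $ i" "\<forall>i. m \<le> mu $ i"
  shows "ereal (Phi False mu zs + m) \<le> Psi pos mu z"
  using Phi_sgn_stable_jump[OF assms(1,2,4,5)] unfolding Psi_eq_Phi by auto

lemma vec_pos_lower_bound:
  fixes lam :: "real^'r"
  assumes "\<forall>i. 0 < lam $ i"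
  obtains m where "0 < m" "\<forall>i. m \<le> lam $ i"
proof
  show "0 < Min (range (\<lambda>i. lam $ i))" using assms by (subst Min_gr_iff) auto
  show "\<forall>i. Min (range (\<lambda>i. lam $ i)) \<le> lam $ i" by (auto intro: Min_le)
qed

declare transpose_matrix_vector [simp del]

lemma continuous_at_linear: "linear L \<Longrightarrow> isCont L x" for L :: "'a::euclidean_space \<Rightarrow> 'b::real_normed_vector"
  by (simp add: linear_continuous_at linear_conv_bounded_linear)

lemma linear_Xi_argument:
  "linear (\<lambda>w::(real^'m) \<times> (real^'r). - (transpose (A::real^'n^'m) *v fst w) - transpose (B::real^'n^'r) *v snd w)"
  by (auto intro!: linearI simp: algebra_simps matrix_vector_right_distrib)

lemma Theta_eq: "Theta f g A = (\<lambda>x. f x + g (A *v x))"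
  by (simp add: fun_eq_iff Theta_def)

lemma Xi_eq: "Xi f g A B b =
    (\<lambda>w. conj f (- (transpose A *v fst w) - transpose B *v snd w) + conj g (fst w) + ereal (b \<bullet> snd w))"
  by (simp add: fun_eq_iff Xi_def)

lemma FP_eq: "FP pos f g A B b lam = (\<lambda>x. Theta f g A x + ereal (Phi pos lam (B *v x - b)))"
  by (simp add: fun_eq_iff FP_def)

lemma GD_eq: "GD pos f g A B b mu = (\<lambda>w. Xi f g A B b w + Psi pos mu (snd w))"
  by (simp add: fun_eq_iff GD_def)

lemma ereal_add_neq_minf: "a \<noteq> -\<infinity> \<Longrightarrow> b \<noteq> -\<infinity> \<Longrightarrow> (a::ereal) + b \<noteq> -\<infinity>"
  by (cases a; cases b) auto

lemma Xi_neq_minf: "proper_fun f \<Longrightarrow> proper_fun g \<Longrightarrow> Xi f g A B b w \<noteq> -\<infinity>"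
  unfolding Xi_def by (intro ereal_add_neq_minf conj_neq_minf) simp_all

lemma convex_fun_Theta:
  assumes "proper_fun f" "convex_fun f" "proper_fun g" "convex_fun g"
  shows "convex_fun (Theta f g A)"
proof -
  have "convex_fun (\<lambda>x. g (A *v x))" by (rule convex_fun_compose_linear[OF assms(4) matrix_vector_mul_linear])
  then show ?thesis
    unfolding Theta_eq using assms by (intro convex_fun_add) (auto simp: proper_fun_def)
qed

lemma lsc_fun_Theta:
  assumes "proper_fun f" "lsc_fun f" "proper_fun g" "lsc_fun g"
  shows "lsc_fun (Theta f g A)"
proof -
  have "lsc_fun (\<lambda>x. g (A *v x))"
    by (rule lsc_fun_compose[OF assms(4) continuous_at_linear[OF matrix_vector_mul_linear]])
  then show ?thesis
    unfolding Theta_eq using assms by (intro lsc_fun_add) (auto simp: proper_fun_def)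
qed

lemma convex_fun_Xi:
  fixes f :: "real^'n \<Rightarrow> ereal" and g :: "real^'m \<Rightarrow> ereal" and B :: "real^'n^'r"
  assumes "proper_fun f" "proper_fun g"
  shows "convex_fun (Xi f g A B b)"
proof -
  have "convex_fun (\<lambda>w. conj f (- (transpose A *v fst w) - transpose B *v snd w))"
    by (rule convex_fun_compose_linear[OF convex_fun_conj linear_Xi_argument])
  moreover have "convex_fun (\<lambda>w::(real^'m) \<times> (real^'r). conj g (fst w))"
    by (rule convex_fun_compose_linear[OF convex_fun_conj linear_fst])
  moreover have "convex_fun (\<lambda>w::(real^'m) \<times> (real^'r). ereal (b \<bullet> snd w))"
    by (rule convex_fun_linear) (auto intro!: linearI simp: inner_add_right)
  ultimately show ?thesis
    unfolding Xi_eq using conj_neq_minf[OF assms(1)] conj_neq_minf[OF assms(2)]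
    by (intro convex_fun_add ereal_add_neq_minf) auto
qed

lemma lsc_fun_Xi:
  fixes f :: "real^'n \<Rightarrow> ereal" and g :: "real^'m \<Rightarrow> ereal" and B :: "real^'n^'r"
  assumes "proper_fun f" "proper_fun g"
  shows "lsc_fun (Xi f g A B b)"
proof -
  have "lsc_fun (\<lambda>w. conj f (- (transpose A *v fst w) - transpose B *v snd w))"
    by (rule lsc_fun_compose[OF lsc_fun_conj continuous_at_linear[OF linear_Xi_argument]])
  moreover have "lsc_fun (\<lambda>w::(real^'m) \<times> (real^'r). conj g (fst w))"
    by (rule lsc_fun_compose[OF lsc_fun_conj]) (intro continuous_intros)
  moreover have "lsc_fun (\<lambda>w::(real^'m) \<times> (real^'r). ereal (b \<bullet> snd w))"
    by (rule lsc_fun_continuous) (intro continuous_intros)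
  ultimately show ?thesis
    unfolding Xi_eq using conj_neq_minf[OF assms(1)] conj_neq_minf[OF assms(2)]
    by (intro lsc_fun_add ereal_add_neq_minf) auto
qed

lemma convex_pattern_feasible_preimage:
  assumes "linear L"
  shows "convex {x. pattern_feasible pos u0 (L x - c)}"
  unfolding convex_alt
proof (intro ballI allI impI)
  fix x y and u :: real
  assume x: "x \<in> {x. pattern_feasible pos u0 (L x - c)}" and y: "y \<in> {x. pattern_feasible pos u0 (L x - c)}"
    and u: "0 \<le> u \<and> u \<le> 1"
  have L: "L ((1 - u) *\<^sub>R x + u *\<^sub>R y) = (1 - u) *\<^sub>R L x + u *\<^sub>R L y"
    using assms by (simp only: linear_add linear_scale)
  have comb: "(L ((1 - u) *\<^sub>R x + u *\<^sub>R y) - c) $ i = (1 - u) * (L x - c) $ i + u * (L y - c) $ i" for i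
    unfolding L by (simp add: algebra_simps)
  show "(1 - u) *\<^sub>R x + u *\<^sub>R y \<in> {x. pattern_feasible pos u0 (L x - c)}"
    unfolding mem_Collect_eq pattern_feasible_def
  proof (intro allI impI)
    fix i assume "u0 $ i = 0"
    then have "if pos then (L x - c) $ i \<le> 0 else (L x - c) $ i = 0"
      "if pos then (L y - c) $ i \<le> 0 else (L y - c) $ i = 0"
      using x y unfolding pattern_feasible_def by auto
    then show "if pos then (L ((1 - u) *\<^sub>R x + u *\<^sub>R y) - c) $ i \<le> 0
        else (L ((1 - u) *\<^sub>R x + u *\<^sub>R y) - c) $ i = 0"
      unfolding comb using u by (cases pos) (auto intro!: add_nonpos_nonpos mult_nonneg_nonpos)
  qed
qed

lemma pattern_feasible_refl: "pattern_feasible pos u u"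
  unfolding pattern_feasible_def by simp

lemma tendsto_affine_matrix:
  fixes B :: "real^'n^'r"
  shows "((\<lambda>x. B *v x - b) \<longlongrightarrow> B *v x0 - b) (nhds x0)"
  by (intro tendsto_diff tendsto_const bounded_linear.tendsto[OF matrix_vector_mul_bounded_linear] filterlim_ident)

lemma eventually_sgn_stable_snd:
  fixes zs :: "real^'r" and ys :: "'a::topological_space"
  shows "eventually (\<lambda>w. \<forall>i. zs $ i \<noteq> 0 \<longrightarrow> sgn (snd w $ i) = sgn (zs $ i)) (nhds (ys, zs))"
proof -
  have "((\<lambda>w. snd w) \<longlongrightarrow> zs) (nhds (ys, zs))"
    using tendsto_snd[OF filterlim_ident[of "nhds (ys, zs)"]] by simp
  then show ?thesis by (rule eventually_sgn_stable)
qed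

lemma Psi_less_infty_imp_nonneg: "Psi pos mu z < \<infinity> \<Longrightarrow> pos \<longrightarrow> (\<forall>i. 0 \<le> z $ i)"
  unfolding Psi_eq_Phi by (auto split: if_splits)

lemma Psi_eq_Phi_of_nonneg: "pos \<longrightarrow> (\<forall>i. 0 \<le> z $ i) \<Longrightarrow> Psi pos mu z = ereal (Phi False mu z)"
  unfolding Psi_eq_Phi by auto

lemma FP_local_min_imp_Theta_min:
  assumes f: "proper_fun f" "convex_fun f" and g: "proper_fun g" "convex_fun g"
    and lm: "local_min (FP pos f g A B b lam) xs" and fin: "FP pos f g A B b lam xs < \<infinity>"
    and x: "pattern_feasible pos (B *v xs - b) (B *v x - b)"
  shows "Theta f g A xs \<le> Theta f g A x"
proof -
  define C where "C = {x. pattern_feasible pos (B *v xs - b) (B *v x - b)}"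
  have "convex C" unfolding C_def by (rule convex_pattern_feasible_preimage[OF matrix_vector_mul_linear])
  moreover have "eventually (\<lambda>y. y \<in> C \<longrightarrow>
      ereal (Phi pos lam (B *v y - b)) = ereal (Phi pos lam (B *v xs - b))) (nhds xs)"
    using eventually_sgn_stable[OF tendsto_affine_matrix[of B b xs]]
  proof eventually_elim
    case (elim y)
    show ?case unfolding C_def mem_Collect_eq using Phi_sgn_stable_eq[OF elim] by simp
  qed
  moreover have "Theta f g A xs < \<infinity>" using fin unfolding FP_def by auto
  ultimately show ?thesis
    using local_min_add_imp_min_on[OF lm[unfolded FP_eq] convex_fun_Theta[OF f g]] x pattern_feasible_refl
    unfolding C_def by blast
qed

lemma Theta_min_imp_FP_local_min:
  assumes f: "proper_fun f" "lsc_fun f" and g: "proper_fun g" "lsc_fun g" and lam: "\<forall>i. 0 < lam $ i"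
    and T: "Theta f g A xs = ereal t"
    and min: "\<And>x. pattern_feasible pos (B *v xs - b) (B *v x - b) \<Longrightarrow> Theta f g A xs \<le> Theta f g A x"
  shows "local_min (FP pos f g A B b lam) xs"
proof -
  obtain m where m: "0 < m" "\<forall>i. m \<le> lam $ i" using vec_pos_lower_bound[OF lam] by blast
  have "eventually (\<lambda>x. ereal (t - m) < Theta f g A x) (nhds xs)"
    using lsc_funD_nhds[OF lsc_fun_Theta[OF f g], of "ereal (t - m)"] T m(1) by simp
  moreover have "eventually (\<lambda>x.
      (ereal (Phi pos lam (B *v x - b)) = ereal (Phi pos lam (B *v xs - b)) \<and> Theta f g A xs \<le> Theta f g A x) \<or>
      ereal (Phi pos lam (B *v xs - b) + m) \<le> ereal (Phi pos lam (B *v x - b))) (nhds xs)"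
    using eventually_sgn_stable[OF tendsto_affine_matrix[of B b xs]]
  proof eventually_elim
    case (elim x)
    show ?case
    proof (cases "pattern_feasible pos (B *v xs - b) (B *v x - b)")
      case True
      then show ?thesis using Phi_sgn_stable_eq[OF elim] min by simp
    next
      case False
      then show ?thesis using Phi_sgn_stable_jump[OF elim False] lam m(2) by (simp add: less_imp_le)
    qed
  qed
  ultimately show ?thesis
    unfolding FP_eq
    by (rule local_min_add_penalty[where H = "Theta f g A" and P = "\<lambda>x. ereal (Phi pos lam (B *v x - b))", OF T _ refl])
qed

lemma GD_less_infty_imp:
  assumes "proper_fun f" "proper_fun g" "GD pos f g A B b mu (ys, zs) < \<infinity>"
  shows "Xi f g A B b (ys, zs) < \<infinity>" "Psi pos mu zs < \<infinity>"
  using assms(3) Xi_neq_minf[OF assms(1,2), of A B b "(ys, zs)"] unfolding GD_def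
  by (cases "Xi f g A B b (ys, zs)"; cases "Psi pos mu zs"; simp add: Psi_eq_Phi)+

lemma GD_local_min_imp_Xi_min:
  fixes f :: "real^'n \<Rightarrow> ereal" and g :: "real^'m \<Rightarrow> ereal" and B :: "real^'n^'r"
  assumes f: "proper_fun f" and g: "proper_fun g"
    and lm: "local_min (GD pos f g A B b mu) (ys, zs)" and fin: "GD pos f g A B b mu (ys, zs) < \<infinity>"
    and z: "pattern_feasible False zs z"
  shows "Xi f g A B b (ys, zs) \<le> Xi f g A B b (y, z)"
proof -
  define C :: "((real^'m) \<times> (real^'r)) set" where "C = {w. pattern_feasible False zs (snd w - 0)}"
  have "convex C" unfolding C_def by (rule convex_pattern_feasible_preimage[OF linear_snd])
  note fin' = GD_less_infty_imp[OF f g fin]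
  have zs: "pos \<longrightarrow> (\<forall>i. 0 \<le> zs $ i)" by (rule Psi_less_infty_imp_nonneg[OF fin'(2)])
  have ev: "eventually (\<lambda>w. w \<in> C \<longrightarrow> Psi pos mu (snd w) = Psi pos mu (snd (ys, zs))) (nhds (ys, zs))"
    using eventually_sgn_stable_snd
  proof eventually_elim
    case (elim w)
    show ?case using Psi_sgn_stable_eq[OF elim _ zs] by (simp add: C_def)
  qed
  have "(ys, zs) \<in> C" "(y, z) \<in> C" using z pattern_feasible_refl unfolding C_def by simp_all
  moreover have "Psi pos mu (snd (ys, zs)) = ereal (Phi False mu zs)" using Psi_eq_Phi_of_nonneg[OF zs] by simp
  ultimately show ?thesis
    using local_min_add_imp_min_on[OF lm[unfolded GD_eq] convex_fun_Xi[OF f g] fin'(1) \<open>convex C\<close> _ _ _ ev]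
    by simp
qed

lemma Xi_min_imp_GD_local_min:
  fixes f :: "real^'n \<Rightarrow> ereal" and g :: "real^'m \<Rightarrow> ereal" and B :: "real^'n^'r"
  assumes f: "proper_fun f" and g: "proper_fun g" and mu: "\<forall>i. 0 < mu $ i"
    and X: "Xi f g A B b (ys, zs) = ereal t" and zs: "pos \<longrightarrow> (\<forall>i. 0 \<le> zs $ i)"
    and min: "\<And>y z. pattern_feasible False zs z \<Longrightarrow> Xi f g A B b (ys, zs) \<le> Xi f g A B b (y, z)"
  shows "local_min (GD pos f g A B b mu) (ys, zs)"
proof -
  obtain m where m: "0 < m" "\<forall>i. m \<le> mu $ i" using vec_pos_lower_bound[OF mu] by blast
  have Psi0: "Psi pos mu (snd (ys, zs)) = ereal (Phi False mu zs)" using Psi_eq_Phi_of_nonneg[OF zs] by simp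
  have "eventually (\<lambda>w. ereal (t - m) < Xi f g A B b w) (nhds (ys, zs))"
    using lsc_funD_nhds[OF lsc_fun_Xi[OF f g, where A = A and B = B and b = b], of "ereal (t - m)" "(ys, zs)"] X m(1)
    by simp
  moreover have "eventually (\<lambda>w. (Psi pos mu (snd w) = Psi pos mu (snd (ys, zs)) \<and>
      Xi f g A B b (ys, zs) \<le> Xi f g A B b w) \<or> ereal (Phi False mu zs + m) \<le> Psi pos mu (snd w)) (nhds (ys, zs))"
    using eventually_sgn_stable_snd
  proof eventually_elim
    case (elim w)
    show ?case
    proof (cases "pattern_feasible False zs (snd w)")
      case True
      then show ?thesis using Psi_sgn_stable_eq[OF elim True zs] min[of "snd w" "fst w"] by simp
    next
      case False
      then show ?thesis using Psi_sgn_stable_jump[OF elim False zs] mu m(2) by (simp add: less_imp_le)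
    qed
  qed
  ultimately show ?thesis
    unfolding GD_eq
    by (rule local_min_add_penalty[where H = "Xi f g A B b" and P = "\<lambda>w. Psi pos mu (snd w)",
          OF X _ Psi0])
qed

section \<open>Primal-dual correspondence\<close>

lemma matrix_vector_mult_nth: "(A *v x) $ i = A $ i \<bullet> x"
  by (simp add: matrix_vector_mult_def inner_vec_def mult.commute)

lemma inner_transpose_left: "(transpose A *v y) \<bullet> x = y \<bullet> (A *v x)" for A :: "real^'n^'m"
  by (simp add: transpose_matrix_vector dot_lmul_matrix)

lemma inner_transpose_right: "x \<bullet> (transpose A *v y) = (A *v x) \<bullet> y" for A :: "real^'n^'m"
  by (metis inner_commute inner_transpose_left)

lemma eq_0_of_inner_nonneg: "(\<And>v. 0 \<le> d \<bullet> v) \<Longrightarrow> d = (0::'a::real_inner)"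
  using inner_eq_zero_iff[of d] by (metis inner_minus_right neg_0_le_iff_le inner_ge_zero order_antisym)

lemma inner_Xi_argument:
  "(- (transpose A *v y) - transpose B *v z) \<bullet> x = - (y \<bullet> (A *v x)) - z \<bullet> (B *v x)"
  for A :: "real^'n^'m" and B :: "real^'n^'r"
  by (simp add: inner_diff_left inner_transpose_left)

lemma sum_UNIV_sum_type:
  "(\<Sum>k\<in>(UNIV::('a::finite + 'b::finite) set). h k) = (\<Sum>i\<in>UNIV. h (Inl i)) + (\<Sum>j\<in>UNIV. h (Inr j))"
  by (simp add: UNIV_Plus_UNIV[symmetric] sum.Plus del: UNIV_Plus_UNIV)

lemma subdiff_Phi_nonneg:
  assumes "z \<in> subdiff_Phi pos u"
  shows "pos \<longrightarrow> (\<forall>i. 0 \<le> z $ i)"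
proof (intro impI allI)
  fix i assume pos
  with assms show "0 \<le> z $ i" unfolding subdiff_Phi_def by (cases "u $ i = 0") auto
qed

lemma subdiff_Phi_inner_eq_0: "z \<in> subdiff_Phi pos u \<Longrightarrow> z \<bullet> u = 0"
  unfolding subdiff_Phi_def inner_vec_def by (auto intro!: sum.neutral)

lemma subdiff_Phi_inner_nonpos:
  fixes z :: "real^'r"
  assumes "z \<in> subdiff_Phi pos u0" "pattern_feasible pos u0 u"
  shows "z \<bullet> u \<le> 0"
  unfolding inner_vec_def inner_real_def
proof (intro sum_nonpos)
  fix i :: 'r
  show "z $ i * u $ i \<le> 0"
  proof (cases "u0 $ i = 0")
    case True
    then show ?thesis using assms unfolding subdiff_Phi_def pattern_feasible_def
      by (cases pos) (auto simp: mult_nonneg_nonpos)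
  next
    case False
    then show ?thesis using assms(1) unfolding subdiff_Phi_def by simp
  qed
qed

lemma subdiff_Phi_of_smaller_support:
  "z \<in> subdiff_Phi pos u \<Longrightarrow> pattern_feasible False z z' \<Longrightarrow> z' \<in> subdiff_Phi False u"
  unfolding subdiff_Phi_def pattern_feasible_def by auto

lemma weak_duality:
  fixes f :: "real^'n \<Rightarrow> ereal" and g :: "real^'m \<Rightarrow> ereal" and B :: "real^'n^'r"
  assumes f: "proper_fun f" and g: "proper_fun g"
  shows "- ereal (z \<bullet> (B *v x - b)) \<le> Theta f g A x + Xi f g A B b (y, z)"
proof (cases "Theta f g A x = \<infinity>")
  case True
  then show ?thesis using Xi_neq_minf[OF f g] by simp
next
  case False
  then obtain a c where a: "f x = ereal a" and c: "g (A *v x) = ereal c"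
    using f g unfolding Theta_def proper_fun_def by (cases "f x"; cases "g (A *v x)") auto
  define q where "q = - (transpose A *v y) - transpose B *v z"
  have Xi: "Xi f g A B b (y, z) = conj f q + conj g y + ereal (b \<bullet> z)" unfolding Xi_def q_def by simp
  have "ereal (q \<bullet> x - a) + ereal (y \<bullet> (A *v x) - c) + ereal (b \<bullet> z) \<le> Xi f g A B b (y, z)"
    unfolding Xi using fenchel_young[of q x f] fenchel_young[of y "A *v x" g] a c
    by (intro add_mono) auto
  moreover have "q \<bullet> x - a + (y \<bullet> (A *v x) - c) + b \<bullet> z = - (z \<bullet> (B *v x - b)) - (a + c)"
    unfolding q_def inner_Xi_argument by (simp add: inner_diff_right inner_commute)
  ultimately have "ereal (- (z \<bullet> (B *v x - b)) - (a + c)) \<le> Xi f g A B b (y, z)" by simp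
  then show ?thesis unfolding Theta_def a c by (cases "Xi f g A B b (y, z)") auto
qed

lemma primal_multipliers:
  fixes f :: "real^'n \<Rightarrow> ereal" and g :: "real^'m \<Rightarrow> ereal" and B :: "real^'n^'r"
  assumes f: "proper_fun f" "convex_fun f" and g: "proper_fun g" "convex_fun g"
    and min: "\<And>x. pattern_feasible pos (B *v xs - b) (B *v x - b) \<Longrightarrow> Theta f g A xs \<le> Theta f g A x"
    and slater: "x0 \<in> slater_dom f" "A *v x0 \<in> slater_dom g" "pattern_feasible pos (B *v xs - b) (B *v x0 - b)"
  obtains y z where "z \<in> subdiff_Phi pos (B *v xs - b)"
    "\<And>x u. Theta f g A xs \<le> f x + g u + ereal (y \<bullet> (A *v x - u) + z \<bullet> (B *v x - b))"
proof -
  define u0 where "u0 = B *v xs - b"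
  \<comment> \<open>the constraints \<open>u = A x\<close> and the sign pattern of \<open>B x - b\<close> on the zeros of \<open>u0\<close>\<close>
  define a :: "'m + 'r \<Rightarrow> ((real^'n) \<times> (real^'m)) \<times> real" where
    "a k = (case k of Inl i \<Rightarrow> ((- A $ i, axis i 1), 0) | Inr i \<Rightarrow> ((if u0 $ i = 0 then B $ i else 0, 0), 0))" for k
  define \<beta> :: "'m + 'r \<Rightarrow> real" where "\<beta> k = (case k of Inl i \<Rightarrow> 0 | Inr i \<Rightarrow> if u0 $ i = 0 then b $ i else 0)" for k
  define eqc :: "'m + 'r \<Rightarrow> bool" where "eqc k = (case k of Inl i \<Rightarrow> True | Inr i \<Rightarrow> \<not> pos)" for k
  have feas: "mixed_feasible a \<beta> eqc UNIV ((x, u), t) \<longleftrightarrow> u = A *v x \<and> pattern_feasible pos u0 (B *v x - b)"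
    for x u t
  proof -
    have "mixed_feasible a \<beta> eqc UNIV ((x, u), t) \<longleftrightarrow> (\<forall>i. u $ i = (A *v x) $ i) \<and>
        (\<forall>i. u0 $ i = 0 \<longrightarrow> (B *v x - b) $ i \<le> 0 \<and> (\<not> pos \<longrightarrow> (B *v x - b) $ i = 0))"
      unfolding mixed_feasible_def ball_UNIV split_sum_all a_def \<beta>_def eqc_def
      by (auto simp: inner_axis' matrix_vector_mult_nth)
    then show ?thesis unfolding pattern_feasible_def vec_eq_iff by (auto split: if_splits)
  qed
  obtain l where l: "\<And>k. \<not> eqc k \<Longrightarrow> 0 \<le> l k"
    and lag: "\<And>x u t. f xs + g (A *v xs) + ereal ((0::real) \<bullet> 0) \<le>
      f x + g u + ereal ((0::real) \<bullet> t + (\<Sum>k\<in>UNIV. l k * (a k \<bullet> ((x, u), t) - \<beta> k)))"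
  proof (rule lagrange_multipliers_blocks[where c = "0::real" and x3s = 0 and x3o = 0 and x1s = xs
        and x2s = "A *v xs", OF f(2) _ g(2) _ slater(1,2)])
    show "mixed_feasible a \<beta> eqc UNIV ((x0, A *v x0), 0)" "mixed_feasible a \<beta> eqc UNIV ((xs, A *v xs), 0)"
      using slater(3) pattern_feasible_refl unfolding feas u0_def by auto
    show "f xs + g (A *v xs) + ereal ((0::real) \<bullet> 0) \<le> f x + g u + ereal ((0::real) \<bullet> t)"
      if "mixed_feasible a \<beta> eqc UNIV ((x, u), t)" for x u t
      using min[of x] that unfolding feas Theta_def u0_def by simp
  qed (use f g in \<open>auto simp: proper_fun_def\<close>)
  define y where "y = - (\<chi> i. l (Inl i))"
  define z where "z = (\<chi> i. if u0 $ i = 0 then l (Inr i) else 0)"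
  have "(\<Sum>k\<in>UNIV. l k * (a k \<bullet> ((x, u), t) - \<beta> k))
      = (\<Sum>i\<in>UNIV. y $ i * (A *v x - u) $ i) + (\<Sum>i\<in>UNIV. z $ i * (B *v x - b) $ i)" for x u t
    unfolding sum_UNIV_sum_type a_def \<beta>_def y_def z_def
    by (intro arg_cong2[where f = "(+)"] sum.cong) (auto simp: inner_axis' matrix_vector_mult_nth algebra_simps)
  then have sum_eq: "(\<Sum>k\<in>UNIV. l k * (a k \<bullet> ((x, u), t) - \<beta> k)) = y \<bullet> (A *v x - u) + z \<bullet> (B *v x - b)"
    for x u t by (simp add: inner_vec_def)
  show ?thesis
  proof (rule that)
    show "z \<in> subdiff_Phi pos (B *v xs - b)"
      using l unfolding subdiff_Phi_def z_def u0_def eqc_def by auto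
    show "Theta f g A xs \<le> f x + g u + ereal (y \<bullet> (A *v x - u) + z \<bullet> (B *v x - b))" for x u
      using lag[of x u 0] sum_eq[of x u 0] unfolding Theta_def by simp
  qed
qed

lemma dual_solution_of_primal_lagrangian:
  fixes f :: "real^'n \<Rightarrow> ereal" and g :: "real^'m \<Rightarrow> ereal" and B :: "real^'n^'r"
  assumes fx: "f xs = ereal a" and gx: "g (A *v xs) = ereal c"
    and z: "z \<in> subdiff_Phi pos (B *v xs - b)"
    and lag: "\<And>x u. Theta f g A xs \<le> f x + g u + ereal (y \<bullet> (A *v x - u) + z \<bullet> (B *v x - b))"
  shows "y \<in> csubdiff g (A *v xs)" "- (transpose A *v y) - transpose B *v z \<in> csubdiff f xs"
    and "Xi f g A B b (y, z) = - Theta f g A xs"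
proof -
  define q where "q = - (transpose A *v y) - transpose B *v z"
  have z0: "z \<bullet> (B *v xs - b) = 0" using z by (rule subdiff_Phi_inner_eq_0)
  show g: "y \<in> csubdiff g (A *v xs)"
    unfolding csubdiff_def
  proof (intro CollectI conjI allI)
    fix u
    have "ereal (a + c) \<le> ereal a + g u + ereal (y \<bullet> (A *v xs - u))"
      using lag[of xs u] fx gx z0 unfolding Theta_def by simp
    then show "g (A *v xs) + ereal (y \<bullet> (u - A *v xs)) \<le> g u"
      using gx by (cases "g u") (auto simp: inner_diff_right)
  qed (use gx in simp)
  show f: "q \<in> csubdiff f xs"
    unfolding csubdiff_def
  proof (intro CollectI conjI allI)
    fix x
    have "z \<bullet> (B *v x - b) = z \<bullet> (B *v x - B *v xs)" using z0 by (simp add: inner_diff_right)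
    then have "ereal (a + c) \<le> f x + ereal c + ereal (y \<bullet> (A *v x - A *v xs) + z \<bullet> (B *v x - B *v xs))"
      using lag[of x "A *v xs"] fx gx unfolding Theta_def by simp
    moreover have "q \<bullet> (x - xs) = - (y \<bullet> (A *v x - A *v xs)) - z \<bullet> (B *v x - B *v xs)"
      unfolding q_def inner_Xi_argument by (simp add: matrix_vector_mult_diff_distrib)
    ultimately show "f xs + ereal (q \<bullet> (x - xs)) \<le> f x"
      using fx by (cases "f x") auto
  qed (use fx in simp)
  have "Xi f g A B b (y, z) = conj f q + conj g y + ereal (b \<bullet> z)" unfolding Xi_def q_def by simp
  also have "\<dots> = (ereal (q \<bullet> xs) - f xs) + (ereal (y \<bullet> (A *v xs)) - g (A *v xs)) + ereal (b \<bullet> z)"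
    unfolding conj_eq_of_csubdiff[OF f] conj_eq_of_csubdiff[OF g] ..
  also have "\<dots> = - ereal (a + c)"
    unfolding fx gx q_def inner_Xi_argument using z0 by (simp add: inner_diff_right inner_commute)
  finally show "Xi f g A B b (y, z) = - Theta f g A xs" unfolding Theta_def fx gx by simp
qed

lemma primal_to_dual:
  fixes f :: "real^'n \<Rightarrow> ereal" and g :: "real^'m \<Rightarrow> ereal" and B :: "real^'n^'r"
  assumes f: "proper_fun f" "lsc_fun f" "convex_fun f" and g: "proper_fun g" "lsc_fun g" "convex_fun g"
    and mu: "\<forall>i. 0 < mu $ i"
    and lm: "local_min (FP pos f g A B b lam) xs" and fin: "FP pos f g A B b lam xs < \<infinity>"
    and slater: "x0 \<in> slater_dom f" "A *v x0 \<in> slater_dom g" "pattern_feasible pos (B *v xs - b) (B *v x0 - b)"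
  shows "\<exists>ys zs. ys \<in> csubdiff g (A *v xs) \<and> zs \<in> subdiff_Phi pos (B *v xs - b) \<and>
    local_min (GD pos f g A B b mu) (ys, zs) \<and> Theta f g A xs = - Xi f g A B b (ys, zs)"
proof -
  have min: "Theta f g A xs \<le> Theta f g A x" if "pattern_feasible pos (B *v xs - b) (B *v x - b)" for x
    using FP_local_min_imp_Theta_min[OF f(1,3) g(1,3) lm fin that] .
  obtain a c where a: "f xs = ereal a" and c: "g (A *v xs) = ereal c"
    using fin f(1) g(1) unfolding FP_def Theta_def proper_fun_def by (cases "f xs"; cases "g (A *v xs)") auto
  obtain y z where z: "z \<in> subdiff_Phi pos (B *v xs - b)"
    and lag: "\<And>x u. Theta f g A xs \<le> f x + g u + ereal (y \<bullet> (A *v x - u) + z \<bullet> (B *v x - b))"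
    using primal_multipliers[OF f(1,3) g(1,3) min slater] by blast
  note dual = dual_solution_of_primal_lagrangian[OF a c z lag]
  have "Xi f g A B b (y, z) \<le> Xi f g A B b (y', z')" if "pattern_feasible False z z'" for y' z'
  proof -
    have "z' \<bullet> (B *v xs - b) = 0"
      using subdiff_Phi_inner_eq_0[OF subdiff_Phi_of_smaller_support[OF z that]] .
    then have "0 \<le> ereal (a + c) + Xi f g A B b (y', z')"
      using weak_duality[OF f(1) g(1), of z' B xs b A y'] a c unfolding Theta_def by (simp add: zero_ereal_def)
    then show ?thesis using dual(3) a c unfolding Theta_def by (cases "Xi f g A B b (y', z')") auto
  qed
  then have "local_min (GD pos f g A B b mu) (y, z)"
    using dual(3) a c subdiff_Phi_nonneg[OF z] unfolding Theta_def
    by (intro Xi_min_imp_GD_local_min[OF f(1) g(1) mu, of A B b y z "- (a + c)"]) auto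
  then show ?thesis using dual z by (intro exI[of _ y] exI[of _ z]) auto
qed

lemma dual_multipliers:
  fixes f :: "real^'n \<Rightarrow> ereal" and g :: "real^'m \<Rightarrow> ereal" and B :: "real^'n^'r"
  assumes f: "proper_fun f" and g: "proper_fun g"
    and min: "\<And>y z. pattern_feasible False zs z \<Longrightarrow> Xi f g A B b (ys, zs) \<le> Xi f g A B b (y, z)"
    and slater: "- (transpose A *v y0) - transpose B *v z0 \<in> slater_dom (conj f)"
      "y0 \<in> slater_dom (conj g)" "pattern_feasible False zs z0"
  obtains x w where "\<forall>i. zs $ i \<noteq> 0 \<longrightarrow> w $ i = 0"
    "\<And>p y z. Xi f g A B b (ys, zs) \<le>
      conj f p + conj g y + ereal (b \<bullet> z + w \<bullet> z - x \<bullet> (p + transpose A *v y + transpose B *v z))"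
proof -
  define q where "q y z = - (transpose A *v y) - transpose B *v z" for y z
  \<comment> \<open>the constraints \<open>p = q y z\<close> and \<open>z\<^sub>i = 0\<close> off the support of \<open>zs\<close>\<close>
  define a :: "'n + 'r \<Rightarrow> ((real^'n) \<times> (real^'m)) \<times> (real^'r)" where
    "a k = (case k of Inl j \<Rightarrow> ((axis j 1, transpose A $ j), transpose B $ j)
      | Inr i \<Rightarrow> ((0, 0), if zs $ i = 0 then axis i 1 else 0))" for k
  have feas: "mixed_feasible a (\<lambda>_. 0) (\<lambda>_. True) UNIV ((p, y), z) \<longleftrightarrow> p = q y z \<and> pattern_feasible False zs z"
    for p y z
  proof -
    have "mixed_feasible a (\<lambda>_. 0) (\<lambda>_. True) UNIV ((p, y), z) \<longleftrightarrow>
        (\<forall>j. p $ j + (transpose A *v y) $ j + (transpose B *v z) $ j = 0) \<and> (\<forall>i. zs $ i = 0 \<longrightarrow> z $ i = 0)"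
      unfolding mixed_feasible_def ball_UNIV split_sum_all a_def
      by (auto simp: inner_axis' matrix_vector_mult_nth)
    also have "\<dots> \<longleftrightarrow> p = q y z \<and> pattern_feasible False zs z"
    proof -
      have "p $ j + (transpose A *v y) $ j + (transpose B *v z) $ j = 0 \<longleftrightarrow> p $ j = q y z $ j" for j
        unfolding q_def by auto
      then show ?thesis unfolding pattern_feasible_def vec_eq_iff by simp
    qed
    finally show ?thesis .
  qed
  have Xi_q: "Xi f g A B b (y, z) = conj f (q y z) + conj g y + ereal (b \<bullet> z)" for y z
    unfolding Xi_def q_def by simp
  obtain l where lag: "\<And>p y z. conj f (q ys zs) + conj g ys + ereal (b \<bullet> zs) \<le>
      conj f p + conj g y + ereal (b \<bullet> z + (\<Sum>k\<in>UNIV. l k * (a k \<bullet> ((p, y), z) - 0)))"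
  proof (rule lagrange_multipliers_blocks[where c = b and x1s = "q ys zs" and x2s = ys and x3s = zs
        and x1o = "q y0 z0" and x3o = z0, OF convex_fun_conj _ convex_fun_conj _ _ slater(2)])
    show "q y0 z0 \<in> slater_dom (conj f)" using slater(1) unfolding q_def .
    show "mixed_feasible a (\<lambda>_. 0) (\<lambda>_. True) UNIV ((q y0 z0, y0), z0)"
      "mixed_feasible a (\<lambda>_. 0) (\<lambda>_. True) UNIV ((q ys zs, ys), zs)"
      using slater(3) pattern_feasible_refl unfolding feas by auto
    show "conj f (q ys zs) + conj g ys + ereal (b \<bullet> zs) \<le> conj f p + conj g y + ereal (b \<bullet> z)"
      if "mixed_feasible a (\<lambda>_. 0) (\<lambda>_. True) UNIV ((p, y), z)" for p y z
      using min[of z y] that unfolding feas Xi_q by auto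
  qed (use conj_neq_minf[OF f] conj_neq_minf[OF g] in auto)
  define x where "x = - (\<chi> j. l (Inl j))"
  define w where "w = (\<chi> i. if zs $ i = 0 then l (Inr i) else 0)"
  have "(\<Sum>k\<in>UNIV. l k * (a k \<bullet> ((p, y), z) - 0))
      = (\<Sum>j\<in>UNIV. - x $ j * (p + transpose A *v y + transpose B *v z) $ j) + (\<Sum>i\<in>UNIV. w $ i * z $ i)"
    for p y z
    unfolding sum_UNIV_sum_type a_def x_def w_def
    by (intro arg_cong2[where f = "(+)"] sum.cong) (auto simp: inner_axis' matrix_vector_mult_nth algebra_simps)
  then have sum_eq: "(\<Sum>k\<in>UNIV. l k * (a k \<bullet> ((p, y), z) - 0))
      = w \<bullet> z - x \<bullet> (p + transpose A *v y + transpose B *v z)" for p y z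
    by (simp add: inner_vec_def sum_negf)
  show ?thesis
  proof (rule that)
    show "\<forall>i. zs $ i \<noteq> 0 \<longrightarrow> w $ i = 0" unfolding w_def by simp
    show "Xi f g A B b (ys, zs) \<le>
        conj f p + conj g y + ereal (b \<bullet> z + w \<bullet> z - x \<bullet> (p + transpose A *v y + transpose B *v z))" for p y z
      using lag[of p y z] unfolding Xi_q sum_eq by (simp add: add.assoc add_diff_eq)
  qed
qed

lemma primal_solution_of_dual_lagrangian:
  fixes f :: "real^'n \<Rightarrow> ereal" and g :: "real^'m \<Rightarrow> ereal" and B :: "real^'n^'r"
  assumes f: "proper_fun f" "lsc_fun f" "convex_fun f" and g: "proper_fun g" "lsc_fun g" "convex_fun g"
    and X: "Xi f g A B b (ys, zs) = ereal t" and w: "\<forall>i. zs $ i \<noteq> 0 \<longrightarrow> w $ i = 0"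
    and lag: "\<And>p y z. Xi f g A B b (ys, zs) \<le>
      conj f p + conj g y + ereal (b \<bullet> z + w \<bullet> z - x \<bullet> (p + transpose A *v y + transpose B *v z))"
  shows "x \<in> csubdiff (conj f) (- (transpose A *v ys) - transpose B *v zs)"
    and "B *v x - b = w"
    and "Theta f g A x = - Xi f g A B b (ys, zs)"
proof -
  define ps where "ps = - (transpose A *v ys) - transpose B *v zs"
  have X': "conj f ps + conj g ys + ereal (b \<bullet> zs) = ereal t" using X unfolding Xi_def ps_def by simp
  then obtain cf cg where cf: "conj f ps = ereal cf" and cg: "conj g ys = ereal cg"
    using conj_neq_minf[OF f(1), of ps] conj_neq_minf[OF g(1), of ys]
    by (cases "conj f ps"; cases "conj g ys") auto
  have t: "t = cf + cg + b \<bullet> zs" using X' cf cg by simp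
  have wzs: "w \<bullet> zs = 0" using w unfolding inner_vec_def by (auto intro!: sum.neutral)
  show sf: "x \<in> csubdiff (conj f) ps"
    unfolding csubdiff_def
  proof (intro CollectI conjI allI)
    fix p
    have e: "p + transpose A *v ys + transpose B *v zs = p - ps" unfolding ps_def by simp
    have "ereal t \<le> conj f p + ereal cg + ereal (b \<bullet> zs - x \<bullet> (p - ps))"
      using lag[of p ys zs, unfolded e] X cg wzs by simp
    then show "conj f ps + ereal (x \<bullet> (p - ps)) \<le> conj f p"
      using cf t by (cases "conj f p") auto
  qed (use cf in simp)
  have sg: "A *v x \<in> csubdiff (conj g) ys"
    unfolding csubdiff_def
  proof (intro CollectI conjI allI)
    fix y
    have e: "x \<bullet> (ps + transpose A *v y + transpose B *v zs) = (A *v x) \<bullet> (y - ys)"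
      unfolding ps_def by (simp add: inner_transpose_right inner_diff_right)
    have "ereal t \<le> ereal cf + conj g y + ereal (b \<bullet> zs - (A *v x) \<bullet> (y - ys))"
      using lag[of ps y zs, unfolded e] X cf wzs by simp
    then show "conj g ys + ereal ((A *v x) \<bullet> (y - ys)) \<le> conj g y"
      using cg t by (cases "conj g y") auto
  qed (use cg in simp)
  \<comment> \<open>the Lagrangian is affine in \<open>z\<close>, so its slope \<open>b + w - B x\<close> vanishes\<close>
  have "0 \<le> (b + w - B *v x) \<bullet> v" for v
  proof -
    have e: "x \<bullet> (ps + transpose A *v ys + transpose B *v (zs + v)) = (B *v x) \<bullet> v"
      unfolding ps_def by (simp add: inner_transpose_right matrix_vector_right_distrib inner_add_right)
    have "ereal t \<le> ereal cf + ereal cg + ereal (b \<bullet> (zs + v) + w \<bullet> (zs + v) - (B *v x) \<bullet> v)"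
      using lag[of ps ys "zs + v", unfolded e] X cf cg by simp
    then show ?thesis using t wzs by (simp add: inner_add_right inner_add_left inner_diff_left)
  qed
  then show Bx: "B *v x - b = w" using eq_0_of_inner_nonneg[of "b + w - B *v x"] by (simp add: algebra_simps)
  have "Theta f g A x = (ereal (x \<bullet> ps) - conj f ps) + (ereal ((A *v x) \<bullet> ys) - conj g ys)"
    unfolding Theta_def conj_conj_eq_of_csubdiff[OF f sf] conj_conj_eq_of_csubdiff[OF g sg] ..
  also have "\<dots> = - ereal t"
  proof -
    have "x \<bullet> ps = - (ys \<bullet> (A *v x)) - zs \<bullet> (B *v x)"
      unfolding ps_def inner_Xi_argument[symmetric] by (rule inner_commute)
    moreover have "zs \<bullet> (B *v x) = b \<bullet> zs" using Bx wzs by (simp add: inner_commute algebra_simps)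
    ultimately show ?thesis using cf cg t by (simp add: inner_commute)
  qed
  finally show "Theta f g A x = - Xi f g A B b (ys, zs)" using X by simp
qed

lemma dual_to_primal:
  fixes f :: "real^'n \<Rightarrow> ereal" and g :: "real^'m \<Rightarrow> ereal" and B :: "real^'n^'r"
  assumes f: "proper_fun f" "lsc_fun f" "convex_fun f" and g: "proper_fun g" "lsc_fun g" "convex_fun g"
    and lam: "\<forall>i. 0 < lam $ i"
    and lm: "local_min (GD pos f g A B b mu) (ys, zs)" and fin: "GD pos f g A B b mu (ys, zs) < \<infinity>"
    and slater: "- (transpose A *v y0) - transpose B *v z0 \<in> slater_dom (conj f)"
      "y0 \<in> slater_dom (conj g)" "pattern_feasible False zs z0"
  shows "\<exists>xs. xs \<in> csubdiff (conj f) (- (transpose A *v ys) - transpose B *v zs) \<and>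
    local_min (FP pos f g A B b lam) xs \<and> Theta f g A xs = - Xi f g A B b (ys, zs)"
proof -
  have min: "Xi f g A B b (ys, zs) \<le> Xi f g A B b (y, z)" if "pattern_feasible False zs z" for y z
    using GD_local_min_imp_Xi_min[OF f(1) g(1) lm fin that] .
  obtain t where t: "Xi f g A B b (ys, zs) = ereal t"
    using GD_less_infty_imp(1)[OF f(1) g(1) fin] Xi_neq_minf[OF f(1) g(1), of A B b "(ys, zs)"]
    by (cases "Xi f g A B b (ys, zs)") auto
  have zs: "pos \<longrightarrow> (\<forall>i. 0 \<le> zs $ i)"
    by (rule Psi_less_infty_imp_nonneg[OF GD_less_infty_imp(2)[OF f(1) g(1) fin]])
  obtain w x where w: "\<forall>i. zs $ i \<noteq> 0 \<longrightarrow> w $ i = 0"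
    and lag: "\<And>p y z. Xi f g A B b (ys, zs) \<le>
      conj f p + conj g y + ereal (b \<bullet> z + w \<bullet> z - x \<bullet> (p + transpose A *v y + transpose B *v z))"
  proof (rule dual_multipliers[OF f(1) g(1) _ slater])
    show "Xi f g A B b (ys, zs) \<le> Xi f g A B b (y, z)" if "pattern_feasible False zs z" for y z
      using min[OF that] .
  qed (rule that)
  note primal = primal_solution_of_dual_lagrangian[OF f g t w lag]
  have zs_sub: "zs \<in> subdiff_Phi pos (B *v x - b)"
    using zs w unfolding primal(2) subdiff_Phi_def by auto
  have "Theta f g A x \<le> Theta f g A x'" if "pattern_feasible pos (B *v x - b) (B *v x' - b)" for x'
  proof -
    have "zs \<bullet> (B *v x' - b) \<le> 0" by (rule subdiff_Phi_inner_nonpos[OF zs_sub that])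
    then have "ereal 0 \<le> ereal (- (zs \<bullet> (B *v x' - b)))" by simp
    also have "\<dots> \<le> Theta f g A x' + ereal t"
      using weak_duality[OF f(1) g(1), of zs B x' b A ys] t by simp
    finally have "0 \<le> Theta f g A x' + ereal t" by (simp add: zero_ereal_def)
    then show ?thesis using primal(3) t by (cases "Theta f g A x'") auto
  qed
  then have "local_min (FP pos f g A B b lam) x"
    using primal(3) t by (intro Theta_min_imp_FP_local_min[OF f(1,2) g(1,2) lam, of A x "- t"]) auto
  then show ?thesis using primal by blast
qed

theorem mainTheorem17:
  fixes f :: "real^'n \<Rightarrow> ereal" and g :: "real^'m \<Rightarrow> ereal"
    and A :: "real^'n^'m" and B :: "real^'n^'r" and b :: "real^'r"
    and lam mu :: "real^'r" and pos :: bool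
  assumes f: "proper_fun f" "lsc_fun f" "convex_fun f"
    and g: "proper_fun g" "lsc_fun g" "convex_fun g"
    and lam: "\<forall>i. lam $ i > 0" and mu: "\<forall>i. mu $ i > 0"
  shows
   "(\<forall>xs. local_min (FP pos f g A B b lam) xs \<and> FP pos f g A B b lam xs < \<infinity> \<and>
        (\<exists>x. x \<in> slater_dom f \<and> A *v x \<in> slater_dom g \<and>
             (\<forall>i. (B *v xs - b) $ i = 0 \<longrightarrow>
                  (if pos then (B *v x - b) $ i \<le> 0 else (B *v x - b) $ i = 0)))
      \<longrightarrow> (\<exists>ys zs. ys \<in> csubdiff g (A *v xs) \<and> zs \<in> subdiff_Phi pos (B *v xs - b) \<and>
             local_min (GD pos f g A B b mu) (ys, zs) \<and>
             Theta f g A xs = - Xi f g A B b (ys, zs)))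
    \<and>
    (\<forall>ys zs. local_min (GD pos f g A B b mu) (ys, zs) \<and> GD pos f g A B b mu (ys, zs) < \<infinity> \<and>
        (\<exists>y z. - (transpose A *v y) - transpose B *v z \<in> slater_dom (conj f) \<and>
             y \<in> slater_dom (conj g) \<and>
             (\<forall>i. zs $ i = 0 \<longrightarrow> z $ i = 0) \<and>
             (pos \<longrightarrow> (\<forall>i. zs $ i \<noteq> 0 \<longrightarrow> z $ i \<ge> 0)))
      \<longrightarrow> (\<exists>xs. xs \<in> csubdiff (conj f) (- (transpose A *v ys) - transpose B *v zs) \<and>
             local_min (FP pos f g A B b lam) xs \<and>
             Theta f g A xs = - Xi f g A B b (ys, zs)))"
  using primal_to_dual[OF f g mu] dual_to_primal[OF f g lam]
  unfolding pattern_feasible_def if_False by blast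

end
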